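(* Let $(X,d,A)$ be a metric pair. A set $S\subset(\overline{D}_\infty(X,A),W_\infty)$ is totally bounded if and only if $S$ is uniformly upper finite and upper totally bounded. For $p\in[1,\infty)$, a set $S\subset(\overline{D}_p(X,A),W_p)$ is totally bounded if and only if $S$ is uniformly upper finite, upper totally bounded, and uniformly $p$-vanishing.
   Context: A metric on $X$ is a map $d:X\times X\to[0,\infty]$ with $d(x,x)=0$, symmetry and the triangle inequality (infinite distances allowed, $d(x,y)=0$ need not imply $x=y$); a metric pair $(X,d,A)$ is such a space with a closed subset $A$. Write $d(x,A)=\inf_{a\in A}d(x,a)$, $A^\delta=\{x:d(x,A)<\delta\}$ for $\delta\in(0,\infty]$. $\overline{D}(X,A)$ is the set of countable formal sums $\hat\alpha=\sum_{i\in I}x_i$ of points of $X\setminus A$ (repetitions allowed); $0$ the empty sum; $|\alpha|=|I|$; the support of $\alpha$ is the set of points appearing in $\hat\alpha$. A matching of $\hat\alpha=\sum_{i\in I}x_i$, $\hat\beta=\sum_{j\in J}y_j$ is a formal sum $\sum_{k\in K}(x_k,y_{\varphi(k)})+\sum_{i\in I\setminus K}(x_i,z_i)+\sum_{j\in J\setminus\varphi(K)}(w_j,y_j)$ with $K\subset I$, $\varphi$ injective, $z_i,w_j\in A$; its $p$-cost is the $\ell^p$ norm (sup norm if $p=\infty$) of the distances of paired points; $W_p$ is the infimum of $p$-costs. $u_\delta(\alpha)$, $\ell_\delta(\alpha)$ are the restrictions of $\hat\alpha$ to $X\setminus A^\delta$ and to $A^\delta\setminus A$. For $p<\infty$, $\overline{D}_p(X,A)=\{\alpha: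 |u_\infty(\alpha)|<\infty,\ W_p(\ell_\infty(\alpha),0)<\infty\}$; $\overline{D}_\infty(X,A)=\{\alpha:|u_\delta(\alpha)|<\infty\ \forall\delta>0\}$. A subset $T$ of a metric space is totally bounded if for each $\varepsilon>0$ there is a finite set $\{t_1,\dots,t_n\}\subset T$ with $T\subset\bigcup_i B_\varepsilon(t_i)$. For $S\subset\overline{D}(X,A)$: $S$ is uniformly upper finite if for every $\varepsilon>0$ there is $M_\varepsilon\ge0$ with $|u_\varepsilon(\alpha)|\le M_\varepsilon$ for all $\alpha\in S$; $S$ is upper totally bounded if for every $\varepsilon>0$ the set $u_\varepsilon(S)=\bigcup_{\alpha\in S}\mathrm{supp}(u_\varepsilon(\alpha))\subset X$ is totally bounded in $(X,d)$; $S$ is uniformly $p$-vanishing if for every $\varepsilon>0$ there is $\delta>0$ with $W_p(\ell_\delta(\alpha),0)<\varepsilon$ for all $\alpha\in S$. *)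

theory Defs
  imports "HOL-Analysis.Analysis"
begin

definition ext_metric :: "('a \<Rightarrow> 'a \<Rightarrow> ennreal) \<Rightarrow> bool" where
  "ext_metric d \<longleftrightarrow> (\<forall>x. d x x = 0) \<and> (\<forall>x y. d x y = d y x)
      \<and> (\<forall>x y z. d x z \<le> d x y + d y z)"

definition setdist :: "('a \<Rightarrow> 'a \<Rightarrow> ennreal) \<Rightarrow> 'a \<Rightarrow> 'a set \<Rightarrow> ennreal" where
  "setdist d x A = (INF a\<in>A. d x a)"

definition d_closed :: "('a \<Rightarrow> 'a \<Rightarrow> ennreal) \<Rightarrow> 'a set \<Rightarrow> bool" where
  "d_closed d A \<longleftrightarrow> (\<forall>x. setdist d x A = 0 \<longrightarrow> x \<in> A)"

definition metric_pair :: "('a \<Rightarrow> 'a \<Rightarrow> ennreal) \<Rightarrow> 'a set \<Rightarrow> bool" where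
  "metric_pair d A \<longleftrightarrow> ext_metric d \<and> d_closed d A"

definition nbhd :: "('a \<Rightarrow> 'a \<Rightarrow> ennreal) \<Rightarrow> 'a set \<Rightarrow> ennreal \<Rightarrow> 'a set" where
  "nbhd d A \<delta> = {x. setdist d x A < \<delta>}"

definition totally_bounded_wrt :: "('b \<Rightarrow> 'b \<Rightarrow> ennreal) \<Rightarrow> 'b set \<Rightarrow> bool" where
  "totally_bounded_wrt \<rho> T \<longleftrightarrow>
     (\<forall>\<epsilon>::real. \<epsilon> > 0 \<longrightarrow> (\<exists>F. finite F \<and> F \<subseteq> T \<and>
        T \<subseteq> (\<Union>t\<in>F. {s. \<rho> t s < ennreal \<epsilon>})))"

text \<open>A countable formal sum \<Sum>_{i\<in>I} x_i is represented by an index set I \<subseteq> nat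
  (every countable index set can be reindexed into nat) together with x :: nat \<Rightarrow> 'a.\<close>
type_synonym 'a diag = "nat set \<times> (nat \<Rightarrow> 'a)"

definition diagrams :: "'a set \<Rightarrow> 'a diag set" where
  "diagrams A = {(I, x). \<forall>i\<in>I. x i \<notin> A}"

definition zero_diag :: "'a diag" where
  "zero_diag = ({}, (\<lambda>_. undefined))"

definition supp :: "'a diag \<Rightarrow> 'a set" where
  "supp \<alpha> = snd \<alpha> ` fst \<alpha>"

definition upper :: "('a \<Rightarrow> 'a \<Rightarrow> ennreal) \<Rightarrow> 'a set \<Rightarrow> ennreal \<Rightarrow> 'a diag \<Rightarrow> 'a diag" where
  "upper d A \<delta> \<alpha> = ({i\<in>fst \<alpha>. snd \<alpha> i \<notin> nbhd d A \<delta>}, snd \<alpha>)"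

definition lower :: "('a \<Rightarrow> 'a \<Rightarrow> ennreal) \<Rightarrow> 'a set \<Rightarrow> ennreal \<Rightarrow> 'a diag \<Rightarrow> 'a diag" where
  "lower d A \<delta> \<alpha> = ({i\<in>fst \<alpha>. snd \<alpha> i \<in> nbhd d A \<delta> - A}, snd \<alpha>)"

definition is_matching :: "'a set \<Rightarrow> 'a diag \<Rightarrow> 'a diag \<Rightarrow> nat set \<Rightarrow> (nat \<Rightarrow> nat)
    \<Rightarrow> (nat \<Rightarrow> 'a) \<Rightarrow> (nat \<Rightarrow> 'a) \<Rightarrow> bool" where
  "is_matching A \<alpha> \<beta> K \<phi> z w \<longleftrightarrow>
     K \<subseteq> fst \<alpha> \<and> inj_on \<phi> K \<and> \<phi> ` K \<subseteq> fst \<beta> \<and>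
     (\<forall>i\<in>fst \<alpha> - K. z i \<in> A) \<and> (\<forall>j\<in>fst \<beta> - \<phi> ` K. w j \<in> A)"

definition enn_powr :: "ennreal \<Rightarrow> real \<Rightarrow> ennreal" where
  "enn_powr e p = (if e = top then top else ennreal (enn2real e powr p))"

definition cost_p :: "('a \<Rightarrow> 'a \<Rightarrow> ennreal) \<Rightarrow> real \<Rightarrow> 'a diag \<Rightarrow> 'a diag \<Rightarrow> nat set
    \<Rightarrow> (nat \<Rightarrow> nat) \<Rightarrow> (nat \<Rightarrow> 'a) \<Rightarrow> (nat \<Rightarrow> 'a) \<Rightarrow> ennreal" where
  "cost_p d p \<alpha> \<beta> K \<phi> z w = enn_powr
     ((\<Sum>\<^sub>\<infinity>k\<in>K. enn_powr (d (snd \<alpha> k) (snd \<beta> (\<phi> k))) p)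
      + (\<Sum>\<^sub>\<infinity>i\<in>fst \<alpha> - K. enn_powr (d (snd \<alpha> i) (z i)) p)
      + (\<Sum>\<^sub>\<infinity>j\<in>fst \<beta> - \<phi> ` K. enn_powr (d (w j) (snd \<beta> j)) p)) (1 / p)"

definition cost_inf :: "('a \<Rightarrow> 'a \<Rightarrow> ennreal) \<Rightarrow> 'a diag \<Rightarrow> 'a diag \<Rightarrow> nat set
    \<Rightarrow> (nat \<Rightarrow> nat) \<Rightarrow> (nat \<Rightarrow> 'a) \<Rightarrow> (nat \<Rightarrow> 'a) \<Rightarrow> ennreal" where
  "cost_inf d \<alpha> \<beta> K \<phi> z w =
     sup (sup (SUP k\<in>K. d (snd \<alpha> k) (snd \<beta> (\<phi> k)))
              (SUP i\<in>fst \<alpha> - K. d (snd \<alpha> i) (z i)))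
         (SUP j\<in>fst \<beta> - \<phi> ` K. d (w j) (snd \<beta> j))"

definition W_p :: "('a \<Rightarrow> 'a \<Rightarrow> ennreal) \<Rightarrow> 'a set \<Rightarrow> real \<Rightarrow> 'a diag \<Rightarrow> 'a diag \<Rightarrow> ennreal" where
  "W_p d A p \<alpha> \<beta> = (INF m\<in>{(K, \<phi>, z, w). is_matching A \<alpha> \<beta> K \<phi> z w}.
      (case m of (K, \<phi>, z, w) \<Rightarrow> cost_p d p \<alpha> \<beta> K \<phi> z w))"

definition W_inf :: "('a \<Rightarrow> 'a \<Rightarrow> ennreal) \<Rightarrow> 'a set \<Rightarrow> 'a diag \<Rightarrow> 'a diag \<Rightarrow> ennreal" where
  "W_inf d A \<alpha> \<beta> = (INF m\<in>{(K, \<phi>, z, w). is_matching A \<alpha> \<beta> K \<phi> z w}.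
      (case m of (K, \<phi>, z, w) \<Rightarrow> cost_inf d \<alpha> \<beta> K \<phi> z w))"

definition D_p :: "('a \<Rightarrow> 'a \<Rightarrow> ennreal) \<Rightarrow> 'a set \<Rightarrow> real \<Rightarrow> 'a diag set" where
  "D_p d A p = {\<alpha>\<in>diagrams A. finite (fst (upper d A top \<alpha>))
                  \<and> W_p d A p (lower d A top \<alpha>) zero_diag < top}"

definition D_inf :: "('a \<Rightarrow> 'a \<Rightarrow> ennreal) \<Rightarrow> 'a set \<Rightarrow> 'a diag set" where
  "D_inf d A = {\<alpha>\<in>diagrams A. \<forall>\<delta>>0. finite (fst (upper d A \<delta> \<alpha>))}"

definition unif_upper_finite :: "('a \<Rightarrow> 'a \<Rightarrow> ennreal) \<Rightarrow> 'a set \<Rightarrow> 'a diag set \<Rightarrow> bool" where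
  "unif_upper_finite d A S \<longleftrightarrow> (\<forall>\<epsilon>::real. \<epsilon> > 0 \<longrightarrow> (\<exists>M::nat. \<forall>\<alpha>\<in>S.
      finite (fst (upper d A (ennreal \<epsilon>) \<alpha>)) \<and> card (fst (upper d A (ennreal \<epsilon>) \<alpha>)) \<le> M))"

definition upper_tot_bounded :: "('a \<Rightarrow> 'a \<Rightarrow> ennreal) \<Rightarrow> 'a set \<Rightarrow> 'a diag set \<Rightarrow> bool" where
  "upper_tot_bounded d A S \<longleftrightarrow> (\<forall>\<epsilon>::real. \<epsilon> > 0 \<longrightarrow>
      totally_bounded_wrt d (\<Union>\<alpha>\<in>S. supp (upper d A (ennreal \<epsilon>) \<alpha>)))"

definition unif_p_vanishing :: "('a \<Rightarrow> 'a \<Rightarrow> ennreal) \<Rightarrow> 'a set \<Rightarrow> real \<Rightarrow> 'a diag set \<Rightarrow> bool" where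
  "unif_p_vanishing d A p S \<longleftrightarrow> (\<forall>\<epsilon>::real. \<epsilon> > 0 \<longrightarrow> (\<exists>\<delta>::real. \<delta> > 0 \<and> (\<forall>\<alpha>\<in>S.
      W_p d A p (lower d A (ennreal \<delta>) \<alpha>) zero_diag < ennreal \<epsilon>)))"

end

theory Submission
  imports Defs
begin

(* If W(alpha, beta) < e, some matching pairs every point of beta at distance >= eps from A
   with a point of alpha at distance >= eps - e from A, at most e away. So a finite W-net S' of S
   bounds the number of far points of every diagram by that of the centres, and puts every far
   point within e of a far point of a centre: S is uniformly upper finite and upper totally
   bounded. For p < oo the p-tails of the finitely many centres are small near A, and a matching
   transports this to every diagram of S (uniform p-vanishing).
   Conversely, cover the far points of all diagrams by a finite eta-net and record, for each
   diagram, how many far points lie near each centre. There are finitely many such patterns;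
   diagrams with the same pattern are matched far point to far point within 2 eta, and the
   near points are sent to A at small cost. All of this works for every real p > 0. *)

section \<open>Sums and powers in ennreal\<close>

lemma INF_ennreal_const_add':
  fixes f :: "'b \<Rightarrow> ennreal"
  assumes "I \<noteq> {}"
  shows "(INF i\<in>I. c + f i) = c + (INF i\<in>I. f i)"
  using continuous_at_Inf_mono[of "\<lambda>x. c + x" "f ` I"]
  using continuous_add[of "at_right (Inf (f ` I))", of "\<lambda>x. c" "\<lambda>x. x"] assms
  by (auto simp: mono_def image_comp add_left_mono)

lemma ennreal_add_le_less:
  assumes "a \<le> ennreal x" "b < ennreal y" "0 \<le> x"
  shows "a + b < ennreal (x + y)"
proof -
  have "a + b \<le> ennreal x + b" using assms(1) by (rule add_right_mono)
  also have "\<dots> < ennreal x + ennreal y" using assms(2) by (simp add: ennreal_add_left_cancel_less)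
  finally have "a + b < ennreal x + ennreal y" .
  moreover have "0 < y" using assms(2) by (metis ennreal_less_zero_iff order_le_less_trans zero_le)
  ultimately show ?thesis using assms(3) by simp
qed

lemma ennreal_add_less_le:
  "a < ennreal x \<Longrightarrow> b \<le> ennreal y \<Longrightarrow> 0 \<le> y \<Longrightarrow> a + b < ennreal (x + y)"
  using ennreal_add_le_less[of b y a x] by (simp add: add.commute)

lemma ennreal_gt_zero_real_below:
  fixes x :: ennreal
  assumes "0 < x"
  obtains r where "0 < r" "ennreal r \<le> x"
proof -
  obtain y where y: "0 < y" "y < x" using dense assms by blast
  then obtain r where "y = ennreal r" "0 \<le> r" by (cases y) auto
  with y that show ?thesis by auto
qed

lemma finite_uniform_lower_bound_ennreal:
  fixes f :: "'b \<Rightarrow> ennreal"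
  assumes "finite G" "\<And>i. i \<in> G \<Longrightarrow> 0 < f i"
  obtains r :: real where "0 < r" "\<And>i. i \<in> G \<Longrightarrow> ennreal r \<le> f i"
  using assms
proof (induction G arbitrary: thesis rule: finite_induct)
  case empty
  show ?case by (rule empty.prems(1)[of 1]) auto
next
  case (insert a G)
  obtain r where r: "0 < r" "\<And>i. i \<in> G \<Longrightarrow> ennreal r \<le> f i"
    using insert.IH insert.prems(2) by blast
  obtain r' where r': "0 < r'" "ennreal r' \<le> f a"
    using ennreal_gt_zero_real_below insert.prems(2) by blast
  show ?case
  proof (rule insert.prems(1)[of "min r r'"])
    fix i assume "i \<in> insert a G"
    moreover have "ennreal (min r r') \<le> ennreal r" "ennreal (min r r') \<le> ennreal r'"
      by (auto intro: ennreal_leI)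
    ultimately show "ennreal (min r r') \<le> f i"
      using r r' by (metis insertE order_trans)
  qed (use r r' in simp)
qed

lemma infsum_subset_ennreal: "B \<subseteq> A \<Longrightarrow> infsum (f :: 'b \<Rightarrow> ennreal) B \<le> infsum f A"
  by (rule infsum_mono_neutral) (auto intro: nonneg_summable_on_complete)

lemma sum_le_infsum_ennreal:
  "finite G \<Longrightarrow> G \<subseteq> B \<Longrightarrow> sum (f :: 'b \<Rightarrow> ennreal) G \<le> infsum f B"
  using infsum_subset_ennreal[of G B f] by simp

lemma le_infsum_ennreal: "k \<in> A \<Longrightarrow> (f :: 'b \<Rightarrow> ennreal) k \<le> infsum f A"
  using sum_le_infsum_ennreal[of "{k}" A f] by simp

lemma infsum_Un_le_ennreal:
  "infsum (f :: 'b \<Rightarrow> ennreal) (A \<union> B) \<le> infsum f A + infsum f B"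
proof -
  have "infsum f (A \<union> B) = infsum f A + infsum f (B - A)"
    by (subst Un_Diff_cancel[symmetric], rule infsum_Un_disjoint)
       (auto intro: nonneg_summable_on_complete)
  also have "\<dots> \<le> infsum f A + infsum f B"
    by (intro add_left_mono infsum_subset_ennreal) auto
  finally show ?thesis .
qed

lemma infsum_le_of_card_le_ennreal:
  assumes "finite A" "card A \<le> N" "\<And>x. x \<in> A \<Longrightarrow> (f :: 'b \<Rightarrow> ennreal) x \<le> c"
  shows "infsum f A \<le> of_nat N * c"
proof -
  have "infsum f A \<le> of_nat (card A) * c" using assms(1,3) by (simp add: sum_bounded_above)
  also have "\<dots> \<le> of_nat N * c" using assms(2) by (intro mult_right_mono) auto
  finally show ?thesis .
qed

lemma infsum_tail_less_ennreal:
  fixes g :: "'b \<Rightarrow> ennreal"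
  assumes "infsum g L < top" "0 < \<tau>"
  obtains G where "finite G" "G \<subseteq> L" "infsum g (L - G) < \<tau>"
proof -
  have split: "infsum g L = sum g G + infsum g (L - G)" if "finite G" "G \<subseteq> L" for G
  proof -
    have "infsum g L = infsum g (G \<union> (L - G))" using that by (simp add: Un_absorb1)
    also have "\<dots> = infsum g G + infsum g (L - G)"
      by (rule infsum_Un_disjoint) (auto intro: nonneg_summable_on_complete)
    finally show ?thesis using that by simp
  qed
  have "infsum g L < infsum g L + \<tau>"
    using assms ennreal_add_left_cancel_less[of "infsum g L" 0 \<tau>] by simp
  also have "\<dots> = (SUP G\<in>{G. finite G \<and> G \<subseteq> L}. sum g G + \<tau>)"
    by (subst ennreal_SUP_add_left) (auto simp: nonneg_infsum_complete)
  finally obtain G where G: "finite G" "G \<subseteq> L" "infsum g L < sum g G + \<tau>"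
    by (auto simp: less_SUP_iff)
  then show thesis
    using that split[OF G(1,2)] by (simp add: ennreal_add_left_cancel_less)
qed

lemma enn_powr_ennreal: "0 \<le> r \<Longrightarrow> enn_powr (ennreal r) p = ennreal (r powr p)"
  by (simp add: enn_powr_def)

lemma enn_powr_top [simp]: "enn_powr top p = top"
  by (simp add: enn_powr_def)

lemma enn_powr_mono:
  assumes "a \<le> b" "0 \<le> p"
  shows "enn_powr a p \<le> enn_powr b p"
proof (cases b)
  case (real s)
  with assms obtain r where "a = ennreal r" "0 \<le> r" "r \<le> s"
    by (cases a) (auto simp: top_unique)
  with real assms show ?thesis by (simp add: enn_powr_ennreal powr_mono2)
qed simp

lemma enn_powr_le_ennreal_powr:
  assumes "x \<le> ennreal e" "0 \<le> p" "0 \<le> e"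
  shows "enn_powr x p \<le> ennreal (e powr p)"
  using enn_powr_mono[OF assms(1,2)] assms(3) by (simp add: enn_powr_ennreal)

lemma ennreal_powr_le_enn_powr:
  assumes "ennreal e \<le> x" "0 \<le> p" "0 \<le> e"
  shows "ennreal (e powr p) \<le> enn_powr x p"
  using enn_powr_mono[OF assms(1,2)] assms(3) by (simp add: enn_powr_ennreal)

lemma enn_powr_less_ennreal_powr_iff:
  assumes "0 < p" "0 < e"
  shows "enn_powr x p < ennreal (e powr p) \<longleftrightarrow> x < ennreal e"
proof (cases x)
  case (real r)
  have "r powr p < e powr p \<longleftrightarrow> r < e"
    using assms real by (smt (verit) powr_less_mono2 powr_mono2)
  with real assms show ?thesis by (simp add: enn_powr_ennreal ennreal_less_iff)
qed simp

lemma enn_powr_inverse_less_iff: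
  assumes "0 < p" "0 < e"
  shows "enn_powr x (1 / p) < ennreal e \<longleftrightarrow> x < ennreal (e powr p)"
  using enn_powr_less_ennreal_powr_iff[of "1 / p" "e powr p" x] assms
  by (simp add: powr_powr)

lemma enn_powr_add_le:
  assumes "0 \<le> p"
  shows "enn_powr (a + b) p \<le> ennreal (2 powr p) * (enn_powr a p + enn_powr b p)"
proof (cases "a = top \<or> b = top")
  case True
  then show ?thesis by (auto simp: ennreal_mult_top)
next
  case False
  then obtain r s where rs: "a = ennreal r" "0 \<le> r" "b = ennreal s" "0 \<le> s"
    by (metis ennreal_cases)
  have "(r + s) powr p \<le> (2 * max r s) powr p"
    using rs assms by (intro powr_mono2) auto
  also have "\<dots> = 2 powr p * max r s powr p"
    using rs by (simp add: powr_mult)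
  also have "\<dots> \<le> 2 powr p * (r powr p + s powr p)"
    by (intro mult_left_mono) (auto simp: max_def)
  finally have "ennreal ((r + s) powr p) \<le> ennreal (2 powr p * (r powr p + s powr p))"
    by (rule ennreal_leI)
  with rs show ?thesis
    by (simp add: enn_powr_ennreal ennreal_mult flip: ennreal_plus)
qed

section \<open>Extended metrics and the parts of a diagram\<close>

lemma ext_metric_sym: "ext_metric d \<Longrightarrow> d x y = d y x"
  by (simp add: ext_metric_def)

lemma ext_metric_triangle: "ext_metric d \<Longrightarrow> d x z \<le> d x y + d y z"
  by (simp add: ext_metric_def)

lemma infsum_dist_powr_triangle:
  assumes "ext_metric d" "0 \<le> p"
  shows "(\<Sum>\<^sub>\<infinity>k\<in>B. enn_powr (d (y k) (z k)) p)
      \<le> ennreal (2 powr p) * ((\<Sum>\<^sub>\<infinity>k\<in>B. enn_powr (d (x k) (y k)) p)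
                              + (\<Sum>\<^sub>\<infinity>k\<in>B. enn_powr (d (x k) (z k)) p))"
proof (rule infsum_le_finite_sums)
  fix G assume G: "finite G" "G \<subseteq> B"
  let ?a = "\<lambda>k. enn_powr (d (x k) (y k)) p" and ?b = "\<lambda>k. enn_powr (d (x k) (z k)) p"
  have "d (y k) (z k) \<le> d (x k) (y k) + d (x k) (z k)" for k
    using ext_metric_triangle[OF assms(1), of "y k" "z k" "x k"] ext_metric_sym[OF assms(1), of "y k"]
    by simp
  then have "(\<Sum>k\<in>G. enn_powr (d (y k) (z k)) p) \<le> (\<Sum>k\<in>G. ennreal (2 powr p) * (?a k + ?b k))"
    using assms(2) by (intro sum_mono order_trans[OF enn_powr_mono enn_powr_add_le])
  also have "\<dots> = ennreal (2 powr p) * (sum ?a G + sum ?b G)"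
    by (simp add: sum_distrib_left sum.distrib distrib_left)
  also have "\<dots> \<le> ennreal (2 powr p) * (infsum ?a B + infsum ?b B)"
    using G by (intro mult_left_mono add_mono) (auto intro!: sum_le_infsum_ennreal)
  finally show "(\<Sum>k\<in>G. enn_powr (d (y k) (z k)) p) \<le> ennreal (2 powr p) * (infsum ?a B + infsum ?b B)" .
qed (rule nonneg_summable_on_complete, simp)

lemma setdist_le: "a \<in> A \<Longrightarrow> setdist d x A \<le> d x a"
  unfolding setdist_def by (rule INF_lower)

lemma setdist_less_iff: "setdist d x A < c \<longleftrightarrow> (\<exists>a\<in>A. d x a < c)"
  unfolding setdist_def by (simp add: INF_less_iff)

lemma setdist_triangle:
  assumes "ext_metric d"
  shows "setdist d x A \<le> d x y + setdist d y A"
proof (cases "A = {}")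
  case False
  have "setdist d x A \<le> (INF a\<in>A. d x y + d y a)"
    unfolding setdist_def by (rule INF_mono) (use ext_metric_triangle[OF assms] in blast)
  also have "\<dots> = d x y + setdist d y A"
    unfolding setdist_def by (rule INF_ennreal_const_add'[OF False])
  finally show ?thesis .
qed (simp add: setdist_def)

lemma setdist_pos: "metric_pair d A \<Longrightarrow> x \<notin> A \<Longrightarrow> 0 < setdist d x A"
  unfolding metric_pair_def d_closed_def using not_gr_zero by blast

lemma mem_upper_iff:
  "i \<in> fst (upper d A \<delta> \<alpha>) \<longleftrightarrow> i \<in> fst \<alpha> \<and> \<delta> \<le> setdist d (snd \<alpha> i) A"
  by (auto simp: upper_def nbhd_def not_less)

lemma mem_lower_iff:
  "i \<in> fst (lower d A \<delta> \<alpha>) \<longleftrightarrow> i \<in> fst \<alpha> \<and> setdist d (snd \<alpha> i) A < \<delta> \<and> snd \<alpha> i \<notin> A"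
  by (simp add: lower_def nbhd_def)

lemma snd_lower [simp]: "snd (lower d A \<delta> \<alpha>) = snd \<alpha>"
  by (simp add: lower_def)

lemma supp_upper: "supp (upper d A \<delta> \<alpha>) = snd \<alpha> ` fst (upper d A \<delta> \<alpha>)"
  by (simp add: supp_def upper_def)

lemma lower_mono: "\<delta> \<le> \<delta>' \<Longrightarrow> fst (lower d A \<delta> \<alpha>) \<subseteq> fst (lower d A \<delta>' \<alpha>)"
  by (auto simp: mem_lower_iff)

lemma lower_eq_diff_upper:
  "\<alpha> \<in> diagrams A \<Longrightarrow> fst (lower d A \<delta> \<alpha>) = fst \<alpha> - fst (upper d A \<delta> \<alpha>)"
  by (auto simp: diagrams_def mem_upper_iff mem_lower_iff)

lemma lower_near_points:
  obtains z where "\<And>i. i \<in> fst (lower d A \<delta> \<alpha>) \<Longrightarrow> z i \<in> A \<and> d (snd \<alpha> i) (z i) < \<delta>"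
proof -
  have "\<forall>i\<in>fst (lower d A \<delta> \<alpha>). \<exists>a. a \<in> A \<and> d (snd \<alpha> i) a < \<delta>"
    by (auto simp: mem_lower_iff setdist_less_iff)
  with that show thesis by metis
qed

lemma totally_bounded_wrt_if_nets:
  assumes "ext_metric d"
    and nets: "\<And>\<eta>. 0 < \<eta> \<Longrightarrow> \<exists>C. finite C \<and> (\<forall>q\<in>T. \<exists>c\<in>C. d c q < ennreal \<eta>)"
  shows "totally_bounded_wrt d T"
  unfolding totally_bounded_wrt_def
proof (intro allI impI)
  fix \<epsilon> :: real assume "0 < \<epsilon>"
  then obtain C where C: "finite C" "\<forall>q\<in>T. \<exists>c\<in>C. d c q < ennreal (\<epsilon>/2)"
    using nets[of "\<epsilon>/2"] by auto
  define C' where "C' = {c\<in>C. \<exists>q\<in>T. d c q < ennreal (\<epsilon>/2)}"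
  \<comment> \<open>The centres need not lie in T: replace each useful centre by a point of T near it.\<close>
  have "\<forall>c\<in>C'. \<exists>q. q \<in> T \<and> d c q < ennreal (\<epsilon>/2)"
    unfolding C'_def by blast
  then obtain near where near: "\<And>c. c \<in> C' \<Longrightarrow> near c \<in> T \<and> d c (near c) < ennreal (\<epsilon>/2)"
    by metis
  show "\<exists>F. finite F \<and> F \<subseteq> T \<and> T \<subseteq> (\<Union>t\<in>F. {s. d t s < ennreal \<epsilon>})"
  proof (intro exI conjI)
    show "finite (near ` C')" using C unfolding C'_def by auto
    show "near ` C' \<subseteq> T" using near by auto
    show "T \<subseteq> (\<Union>t\<in>near ` C'. {s. d t s < ennreal \<epsilon>})"
    proof
      fix q assume q: "q \<in> T"
      then obtain c where c: "c \<in> C" "d c q < ennreal (\<epsilon>/2)" using C by auto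
      then have cC': "c \<in> C'" using q unfolding C'_def by auto
      have "d (near c) q \<le> d (near c) c + d c q" by (rule ext_metric_triangle[OF assms(1)])
      also have "\<dots> < ennreal (\<epsilon>/2 + \<epsilon>/2)"
        using near[OF cC'] c ext_metric_sym[OF assms(1)] by (intro add_mono_ennreal) auto
      finally show "q \<in> (\<Union>t\<in>near ` C'. {s. d t s < ennreal \<epsilon>})" using cC' by auto
    qed
  qed
qed

section \<open>Matchings and Wasserstein distances\<close>

definition cost_powr :: "('a \<Rightarrow> 'a \<Rightarrow> ennreal) \<Rightarrow> real \<Rightarrow> 'a diag \<Rightarrow> 'a diag \<Rightarrow> nat set
    \<Rightarrow> (nat \<Rightarrow> nat) \<Rightarrow> (nat \<Rightarrow> 'a) \<Rightarrow> (nat \<Rightarrow> 'a) \<Rightarrow> ennreal" where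
  "cost_powr d p \<alpha> \<beta> K \<phi> z w =
     (\<Sum>\<^sub>\<infinity>k\<in>K. enn_powr (d (snd \<alpha> k) (snd \<beta> (\<phi> k))) p)
      + (\<Sum>\<^sub>\<infinity>i\<in>fst \<alpha> - K. enn_powr (d (snd \<alpha> i) (z i)) p)
      + (\<Sum>\<^sub>\<infinity>j\<in>fst \<beta> - \<phi> ` K. enn_powr (d (w j) (snd \<beta> j)) p)"

lemma cost_p_eq_cost_powr: "cost_p d p \<alpha> \<beta> K \<phi> z w = enn_powr (cost_powr d p \<alpha> \<beta> K \<phi> z w) (1 / p)"
  by (simp add: cost_p_def cost_powr_def)

lemma W_inf_le_cost_inf: "is_matching A \<alpha> \<beta> K \<phi> z w \<Longrightarrow> W_inf d A \<alpha> \<beta> \<le> cost_inf d \<alpha> \<beta> K \<phi> z w"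
  unfolding W_inf_def by (rule INF_lower2[where i="(K, \<phi>, z, w)"]) auto

lemma W_inf_less_iff:
  "W_inf d A \<alpha> \<beta> < c \<longleftrightarrow> (\<exists>K \<phi> z w. is_matching A \<alpha> \<beta> K \<phi> z w \<and> cost_inf d \<alpha> \<beta> K \<phi> z w < c)"
  unfolding W_inf_def by (auto simp: INF_less_iff)

lemma W_p_less_iff:
  assumes "0 < p" "0 < e"
  shows "W_p d A p \<alpha> \<beta> < ennreal e \<longleftrightarrow>
    (\<exists>K \<phi> z w. is_matching A \<alpha> \<beta> K \<phi> z w \<and> cost_powr d p \<alpha> \<beta> K \<phi> z w < ennreal (e powr p))"
  unfolding W_p_def by (auto simp: INF_less_iff cost_p_eq_cost_powr enn_powr_inverse_less_iff[OF assms])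

lemma W_p_zero_less_iff:
  assumes "0 < p" "0 < e"
  shows "W_p d A p \<alpha> zero_diag < ennreal e \<longleftrightarrow>
    (\<exists>z. (\<forall>i\<in>fst \<alpha>. z i \<in> A) \<and> (\<Sum>\<^sub>\<infinity>i\<in>fst \<alpha>. enn_powr (d (snd \<alpha> i) (z i)) p) < ennreal (e powr p))"
proof -
  have "is_matching A \<alpha> zero_diag K \<phi> z w \<longleftrightarrow> K = {} \<and> (\<forall>i\<in>fst \<alpha>. z i \<in> A)" for K \<phi> z w
    by (auto simp: is_matching_def zero_diag_def)
  then show ?thesis
    unfolding W_p_less_iff[OF assms] by (auto simp: cost_powr_def zero_diag_def)
qed

lemma is_matching_upper_bijection:
  assumes "\<alpha> \<in> diagrams A" "\<beta> \<in> diagrams A"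
    and "bij_betw \<psi> (fst (upper d A \<delta> \<alpha>)) (fst (upper d A \<delta> \<beta>))"
    and "\<forall>i\<in>fst (lower d A \<delta> \<alpha>). z i \<in> A" "\<forall>j\<in>fst (lower d A \<delta> \<beta>). w j \<in> A"
  shows "is_matching A \<alpha> \<beta> (fst (upper d A \<delta> \<alpha>)) \<psi> z w"
  using assms by (auto simp: is_matching_def bij_betw_def lower_eq_diff_upper mem_upper_iff)

lemma cost_powr_upper_bijection:
  assumes "ext_metric d" "\<alpha> \<in> diagrams A" "\<beta> \<in> diagrams A"
    and "bij_betw \<psi> (fst (upper d A \<delta> \<alpha>)) (fst (upper d A \<delta> \<beta>))"
  shows "cost_powr d p \<alpha> \<beta> (fst (upper d A \<delta> \<alpha>)) \<psi> z w =
      (\<Sum>\<^sub>\<infinity>k\<in>fst (upper d A \<delta> \<alpha>). enn_powr (d (snd \<alpha> k) (snd \<beta> (\<psi> k))) p)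
    + (\<Sum>\<^sub>\<infinity>i\<in>fst (lower d A \<delta> \<alpha>). enn_powr (d (snd \<alpha> i) (z i)) p)
    + (\<Sum>\<^sub>\<infinity>j\<in>fst (lower d A \<delta> \<beta>). enn_powr (d (snd \<beta> j) (w j)) p)"
proof -
  have "\<psi> ` fst (upper d A \<delta> \<alpha>) = fst (upper d A \<delta> \<beta>)"
    using assms(4) by (simp add: bij_betw_def)
  moreover have "enn_powr (d (w j) (snd \<beta> j)) p = enn_powr (d (snd \<beta> j) (w j)) p" for j
    using ext_metric_sym[OF assms(1), of "w j"] by simp
  ultimately show ?thesis
    using assms(2,3) unfolding cost_powr_def by (simp add: lower_eq_diff_upper)
qed

lemma cost_powr_upper_bijection_less:
  assumes em: "ext_metric d" and p: "0 < p" and diag: "\<alpha> \<in> diagrams A" "\<beta> \<in> diagrams A"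
    and \<psi>: "bij_betw \<psi> (fst (upper d A \<delta> \<alpha>)) (fst (upper d A \<delta> \<beta>))"
    and M: "finite (fst (upper d A \<delta> \<alpha>)) \<and> card (fst (upper d A \<delta> \<alpha>)) \<le> M"
    and close: "\<forall>k\<in>fst (upper d A \<delta> \<alpha>). d (snd \<alpha> k) (snd \<beta> (\<psi> k)) \<le> ennreal e" and e: "0 \<le> e"
    and z: "(\<Sum>\<^sub>\<infinity>i\<in>fst (lower d A \<delta> \<alpha>). enn_powr (d (snd \<alpha> i) (z i)) p) < ennreal q"
    and w: "(\<Sum>\<^sub>\<infinity>j\<in>fst (lower d A \<delta> \<beta>). enn_powr (d (snd \<beta> j) (w j)) p) < ennreal q"
  shows "cost_powr d p \<alpha> \<beta> (fst (upper d A \<delta> \<alpha>)) \<psi> z w < ennreal (real M * e powr p + q + q)"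
proof -
  have "(\<Sum>\<^sub>\<infinity>k\<in>fst (upper d A \<delta> \<alpha>). enn_powr (d (snd \<alpha> k) (snd \<beta> (\<psi> k))) p) \<le> of_nat M * ennreal (e powr p)"
    using M close p e by (intro infsum_le_of_card_le_ennreal) (auto intro!: enn_powr_le_ennreal_powr)
  also have "\<dots> = ennreal (real M * e powr p)"
    by (simp add: ennreal_mult ennreal_of_nat_eq_real_of_nat)
  finally show ?thesis
    unfolding cost_powr_upper_bijection[OF em diag \<psi>] using z w
    by (intro add_mono_ennreal ennreal_add_le_less) auto
qed

section \<open>Diagrams of finite p-cost\<close>

lemma D_p_lower_sum_finite:
  assumes "0 < p" "\<alpha> \<in> D_p d A p"
  obtains \<zeta> where "\<forall>i\<in>fst (lower d A top \<alpha>). \<zeta> i \<in> A"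
    "(\<Sum>\<^sub>\<infinity>i\<in>fst (lower d A top \<alpha>). enn_powr (d (snd \<alpha> i) (\<zeta> i)) p) < top"
proof -
  have "W_p d A p (lower d A top \<alpha>) zero_diag < top" using assms(2) by (simp add: D_p_def)
  then obtain r where r: "0 \<le> r" "W_p d A p (lower d A top \<alpha>) zero_diag = ennreal r"
    by (cases "W_p d A p (lower d A top \<alpha>) zero_diag") auto
  then have e: "0 < r + 1" "W_p d A p (lower d A top \<alpha>) zero_diag < ennreal (r + 1)"
    by (auto simp: ennreal_less_iff)
  from e(2) show thesis
    unfolding W_p_zero_less_iff[OF assms(1) e(1)] snd_lower
    using that by (meson ennreal_less_top order.strict_trans)
qed

lemma finite_upper_if_D_p:
  assumes p: "0 < p" and \<alpha>: "\<alpha> \<in> D_p d A p" and \<delta>: "0 < \<delta>"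
  shows "finite (fst (upper d A (ennreal \<delta>) \<alpha>))"
proof -
  obtain \<zeta> where \<zeta>: "\<forall>i\<in>fst (lower d A top \<alpha>). \<zeta> i \<in> A"
    "(\<Sum>\<^sub>\<infinity>i\<in>fst (lower d A top \<alpha>). enn_powr (d (snd \<alpha> i) (\<zeta> i)) p) < top"
    using D_p_lower_sum_finite[OF p \<alpha>] by blast
  define B where "B = {i\<in>fst (lower d A top \<alpha>). ennreal \<delta> \<le> setdist d (snd \<alpha> i) A}"
  have "fst (upper d A (ennreal \<delta>) \<alpha>) \<subseteq> fst (upper d A top \<alpha>) \<union> B"
    using \<alpha> by (auto simp: B_def D_p_def lower_eq_diff_upper mem_upper_iff top_unique)
  moreover have "finite (fst (upper d A top \<alpha>))" using \<alpha> by (simp add: D_p_def)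
  moreover have "finite B"
  proof (rule ccontr)
    assume "infinite B"
    \<comment> \<open>every point of B contributes at least \<delta> powr p to the finite sum\<close>
    have "(\<Sum>\<^sub>\<infinity>i\<in>B. enn_powr (d (snd \<alpha> i) (\<zeta> i)) p) = \<infinity>"
    proof (rule infsum_superconst_infinite_ennreal[OF _ _ \<open>infinite B\<close>])
      fix i assume "i \<in> B"
      then have "ennreal \<delta> \<le> d (snd \<alpha> i) (\<zeta> i)"
        using \<zeta>(1) setdist_le[of "\<zeta> i" A d "snd \<alpha> i"] by (auto simp: B_def intro: order_trans)
      then show "ennreal (\<delta> powr p) \<le> enn_powr (d (snd \<alpha> i) (\<zeta> i)) p"
        using p \<delta> by (intro ennreal_powr_le_enn_powr) auto
    qed (use \<delta> in simp)
    moreover have "(\<Sum>\<^sub>\<infinity>i\<in>B. enn_powr (d (snd \<alpha> i) (\<zeta> i)) p)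
        \<le> (\<Sum>\<^sub>\<infinity>i\<in>fst (lower d A top \<alpha>). enn_powr (d (snd \<alpha> i) (\<zeta> i)) p)"
      by (rule infsum_subset_ennreal) (auto simp: B_def)
    ultimately show False using \<zeta>(2) by (simp add: top_unique)
  qed
  ultimately show ?thesis by (meson finite_UnI finite_subset)
qed

lemma D_p_subset_D_inf: "0 < p \<Longrightarrow> D_p d A p \<subseteq> D_inf d A"
proof
  fix \<alpha> assume p: "0 < p" and \<alpha>: "\<alpha> \<in> D_p d A p"
  have "finite (fst (upper d A \<delta> \<alpha>))" if "0 < \<delta>" for \<delta>
  proof (cases \<delta>)
    case (real r)
    then show ?thesis using finite_upper_if_D_p[OF p \<alpha>, of r] that by simp
  qed (use \<alpha> in \<open>simp add: D_p_def\<close>)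
  then show "\<alpha> \<in> D_inf d A" using \<alpha> by (simp add: D_p_def D_inf_def)
qed

lemma D_p_lower_tail:
  assumes mp: "metric_pair d A" and p: "0 < p" and \<alpha>: "\<alpha> \<in> D_p d A p" and \<tau>: "0 < \<tau>"
  obtains \<delta> :: real and \<zeta> where "0 < \<delta>" "\<forall>i\<in>fst (lower d A (ennreal \<delta>) \<alpha>). \<zeta> i \<in> A"
    "(\<Sum>\<^sub>\<infinity>i\<in>fst (lower d A (ennreal \<delta>) \<alpha>). enn_powr (d (snd \<alpha> i) (\<zeta> i)) p) < \<tau>"
proof -
  define L where "L = fst (lower d A top \<alpha>)"
  define g where "g \<zeta> i = enn_powr (d (snd \<alpha> i) (\<zeta> i)) p" for \<zeta> i
  obtain \<zeta> where \<zeta>: "\<forall>i\<in>L. \<zeta> i \<in> A" "infsum (g \<zeta>) L < top"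
    using D_p_lower_sum_finite[OF p \<alpha>] unfolding L_def g_def by blast
  then obtain G where G: "finite G" "G \<subseteq> L" "infsum (g \<zeta>) (L - G) < \<tau>"
    using infsum_tail_less_ennreal[OF \<zeta>(2) \<tau>] by blast
  \<comment> \<open>A is closed, so the finitely many points indexed by G keep a positive distance from A\<close>
  have "0 < setdist d (snd \<alpha> i) A" if "i \<in> G" for i
    using that G(2) setdist_pos[OF mp] by (auto simp: L_def mem_lower_iff)
  then obtain \<delta> where \<delta>: "0 < \<delta>" "\<And>i. i \<in> G \<Longrightarrow> ennreal \<delta> \<le> setdist d (snd \<alpha> i) A"
    using finite_uniform_lower_bound_ennreal[OF G(1), of "\<lambda>i. setdist d (snd \<alpha> i) A"] by blast
  have sub: "fst (lower d A (ennreal \<delta>) \<alpha>) \<subseteq> L - G"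
  proof
    fix i assume "i \<in> fst (lower d A (ennreal \<delta>) \<alpha>)"
    then have i: "i \<in> fst \<alpha>" "setdist d (snd \<alpha> i) A < ennreal \<delta>" "snd \<alpha> i \<notin> A"
      by (auto simp: mem_lower_iff)
    moreover have "setdist d (snd \<alpha> i) A < top"
      by (rule order.strict_trans[OF i(2) ennreal_less_top])
    ultimately have "i \<in> L" by (simp add: L_def mem_lower_iff)
    moreover have "i \<notin> G" using i(2) by (auto dest: \<delta>(2))
    ultimately show "i \<in> L - G" by blast
  qed
  show thesis
  proof (rule that[OF \<delta>(1)])
    show "\<forall>i\<in>fst (lower d A (ennreal \<delta>) \<alpha>). \<zeta> i \<in> A" using sub \<zeta>(1) by auto
    show "(\<Sum>\<^sub>\<infinity>i\<in>fst (lower d A (ennreal \<delta>) \<alpha>). enn_powr (d (snd \<alpha> i) (\<zeta> i)) p) < \<tau>"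
      using infsum_subset_ennreal[OF sub, of "g \<zeta>"] G(3) unfolding g_def by simp
  qed
qed

lemma D_p_lower_tails_finite:
  assumes mp: "metric_pair d A" and p: "0 < p" and "finite F" "F \<subseteq> D_p d A p" and \<tau>: "0 < \<tau>"
  obtains \<delta> :: real and \<zeta> where "0 < \<delta>"
    "\<And>\<alpha>. \<alpha> \<in> F \<Longrightarrow> \<forall>i\<in>fst (lower d A (ennreal \<delta>) \<alpha>). \<zeta> \<alpha> i \<in> A"
    "\<And>\<alpha>. \<alpha> \<in> F \<Longrightarrow> (\<Sum>\<^sub>\<infinity>i\<in>fst (lower d A (ennreal \<delta>) \<alpha>). enn_powr (d (snd \<alpha> i) (\<zeta> \<alpha> i)) p) < \<tau>"
  using assms(3,4)
proof (induction F arbitrary: thesis rule: finite_induct)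
  case empty
  show ?case by (rule empty.prems(1)[of 1]) auto
next
  case (insert \<alpha> F)
  obtain \<delta>\<^sub>1 \<zeta> where \<delta>\<^sub>1: "0 < \<delta>\<^sub>1"
    "\<And>\<alpha>. \<alpha> \<in> F \<Longrightarrow> \<forall>i\<in>fst (lower d A (ennreal \<delta>\<^sub>1) \<alpha>). \<zeta> \<alpha> i \<in> A"
    "\<And>\<alpha>. \<alpha> \<in> F \<Longrightarrow> (\<Sum>\<^sub>\<infinity>i\<in>fst (lower d A (ennreal \<delta>\<^sub>1) \<alpha>). enn_powr (d (snd \<alpha> i) (\<zeta> \<alpha> i)) p) < \<tau>"
    using insert.IH insert.prems(2) by blast
  obtain \<delta>\<^sub>2 \<zeta>\<^sub>\<alpha> where \<delta>\<^sub>2: "0 < \<delta>\<^sub>2" "\<forall>i\<in>fst (lower d A (ennreal \<delta>\<^sub>2) \<alpha>). \<zeta>\<^sub>\<alpha> i \<in> A"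
    "(\<Sum>\<^sub>\<infinity>i\<in>fst (lower d A (ennreal \<delta>\<^sub>2) \<alpha>). enn_powr (d (snd \<alpha> i) (\<zeta>\<^sub>\<alpha> i)) p) < \<tau>"
    using D_p_lower_tail[OF mp p _ \<tau>, of \<alpha>] insert.prems(2) by blast
  have sub: "fst (lower d A (ennreal (min \<delta>\<^sub>1 \<delta>\<^sub>2)) \<beta>) \<subseteq> fst (lower d A (ennreal \<delta>\<^sub>1) \<beta>)"
    "fst (lower d A (ennreal (min \<delta>\<^sub>1 \<delta>\<^sub>2)) \<beta>) \<subseteq> fst (lower d A (ennreal \<delta>\<^sub>2) \<beta>)" for \<beta>
    by (auto intro!: lower_mono ennreal_leI)
  show ?case
  proof (rule insert.prems(1)[of "min \<delta>\<^sub>1 \<delta>\<^sub>2" "\<zeta>(\<alpha> := \<zeta>\<^sub>\<alpha>)"])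
    fix \<beta> assume "\<beta> \<in> insert \<alpha> F"
    then show "\<forall>i\<in>fst (lower d A (ennreal (min \<delta>\<^sub>1 \<delta>\<^sub>2)) \<beta>). (\<zeta>(\<alpha> := \<zeta>\<^sub>\<alpha>)) \<beta> i \<in> A"
      using \<delta>\<^sub>1(2)[of \<beta>] \<delta>\<^sub>2(2) sub[of \<beta>] insert.hyps(2) by (cases "\<beta> = \<alpha>") auto
    show "(\<Sum>\<^sub>\<infinity>i\<in>fst (lower d A (ennreal (min \<delta>\<^sub>1 \<delta>\<^sub>2)) \<beta>).
        enn_powr (d (snd \<beta> i) ((\<zeta>(\<alpha> := \<zeta>\<^sub>\<alpha>)) \<beta> i)) p) < \<tau>"
      using \<open>\<beta> \<in> insert \<alpha> F\<close> \<delta>\<^sub>1(3)[of \<beta>] \<delta>\<^sub>2(3) insert.hyps(2)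
        order.strict_trans1[OF infsum_subset_ennreal[OF sub(1)[of \<beta>]]]
        order.strict_trans1[OF infsum_subset_ennreal[OF sub(2)[of \<beta>]]]
      by (cases "\<beta> = \<alpha>") auto
  qed (use \<delta>\<^sub>1 \<delta>\<^sub>2 in simp)
qed

section \<open>Necessity of the upper conditions\<close>

text \<open>One-sided closeness: only the pairs involving points of \<beta> are constrained, which is
  all that is needed to control the upper part of \<beta>.\<close>
definition matched_within :: "('a \<Rightarrow> 'a \<Rightarrow> ennreal) \<Rightarrow> 'a set \<Rightarrow> ennreal \<Rightarrow> 'a diag \<Rightarrow> 'a diag \<Rightarrow> bool" where
  "matched_within d A e \<alpha> \<beta> \<longleftrightarrow> (\<exists>K \<phi> z w. is_matching A \<alpha> \<beta> K \<phi> z w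
     \<and> (\<forall>k\<in>K. d (snd \<alpha> k) (snd \<beta> (\<phi> k)) < e) \<and> (\<forall>j\<in>fst \<beta> - \<phi> ` K. d (w j) (snd \<beta> j) < e))"

lemma W_inf_less_imp_matched_within:
  assumes "W_inf d A \<alpha> \<beta> < e"
  shows "matched_within d A e \<alpha> \<beta>"
proof -
  obtain K \<phi> z w where m: "is_matching A \<alpha> \<beta> K \<phi> z w" and c: "cost_inf d \<alpha> \<beta> K \<phi> z w < e"
    using assms W_inf_less_iff by blast
  have "d (snd \<alpha> k) (snd \<beta> (\<phi> k)) \<le> cost_inf d \<alpha> \<beta> K \<phi> z w" if "k \<in> K" for k
    using that unfolding cost_inf_def by (meson SUP_upper sup.coboundedI1)
  moreover have "d (w j) (snd \<beta> j) \<le> cost_inf d \<alpha> \<beta> K \<phi> z w" if "j \<in> fst \<beta> - \<phi> ` K" for j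
    using that unfolding cost_inf_def by (meson SUP_upper sup.coboundedI2)
  ultimately show ?thesis
    using m c unfolding matched_within_def by (meson le_less_trans)
qed

lemma W_p_less_imp_matched_within:
  assumes "0 < p" "0 < e" "W_p d A p \<alpha> \<beta> < ennreal e"
  shows "matched_within d A (ennreal e) \<alpha> \<beta>"
proof -
  obtain K \<phi> z w where m: "is_matching A \<alpha> \<beta> K \<phi> z w"
    and c: "cost_powr d p \<alpha> \<beta> K \<phi> z w < ennreal (e powr p)"
    using assms W_p_less_iff by blast
  have "enn_powr (d (snd \<alpha> k) (snd \<beta> (\<phi> k))) p \<le> cost_powr d p \<alpha> \<beta> K \<phi> z w" if "k \<in> K" for k
    using that unfolding cost_powr_def by (intro add_increasing2 le_infsum_ennreal) auto
  moreover have "enn_powr (d (w j) (snd \<beta> j)) p \<le> cost_powr d p \<alpha> \<beta> K \<phi> z w"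
    if "j \<in> fst \<beta> - \<phi> ` K" for j
    using that unfolding cost_powr_def by (intro add_increasing le_infsum_ennreal) auto
  ultimately show ?thesis
    using m c enn_powr_less_ennreal_powr_iff[OF assms(1,2)]
    unfolding matched_within_def by (meson le_less_trans)
qed

lemma upper_subset_image_matching:
  assumes em: "ext_metric d" and m: "is_matching A \<alpha> \<beta> K \<phi> z w"
    and matched: "\<forall>k\<in>K. d (snd \<alpha> k) (snd \<beta> (\<phi> k)) < ennreal e"
    and unmatched: "\<forall>j\<in>fst \<beta> - \<phi> ` K. d (w j) (snd \<beta> j) < ennreal e"
    and e: "0 \<le> e" "0 \<le> e'" "e + e' \<le> \<epsilon>"
  shows "fst (upper d A (ennreal \<epsilon>) \<beta>) \<subseteq> \<phi> ` (K \<inter> fst (upper d A (ennreal e') \<alpha>))"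
proof
  fix j assume "j \<in> fst (upper d A (ennreal \<epsilon>) \<beta>)"
  then have j: "j \<in> fst \<beta>" "ennreal \<epsilon> \<le> setdist d (snd \<beta> j) A"
    by (auto simp: mem_upper_iff)
  have "j \<in> \<phi> ` K"
  proof (rule ccontr)
    assume "j \<notin> \<phi> ` K"
    then have wj: "w j \<in> A" "d (snd \<beta> j) (w j) < ennreal e"
      using m unmatched j(1) ext_metric_sym[OF em, of "snd \<beta> j"] by (auto simp: is_matching_def)
    have "setdist d (snd \<beta> j) A < ennreal e"
      using setdist_le[OF wj(1), of d "snd \<beta> j"] wj(2) by (rule order_le_less_trans)
    also have "\<dots> \<le> ennreal \<epsilon>" using e by (intro ennreal_leI) simp
    finally show False using j(2) by simp
  qed
  then obtain k where k: "k \<in> K" "j = \<phi> k" by blast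
  have "ennreal e' \<le> setdist d (snd \<alpha> k) A"
  proof (rule ccontr)
    assume "\<not> ennreal e' \<le> setdist d (snd \<alpha> k) A"
    then have "d (snd \<beta> j) (snd \<alpha> k) + setdist d (snd \<alpha> k) A < ennreal (e + e')"
      using matched k ext_metric_sym[OF em, of "snd \<beta> j"] by (intro add_mono_ennreal) (auto simp: not_le)
    then have "setdist d (snd \<beta> j) A < ennreal (e + e')"
      by (rule order_le_less_trans[OF setdist_triangle[OF em]])
    also have "\<dots> \<le> ennreal \<epsilon>" using e by (intro ennreal_leI)
    finally show False using j(2) by simp
  qed
  then show "j \<in> \<phi> ` (K \<inter> fst (upper d A (ennreal e') \<alpha>))"
    using k m by (auto simp: mem_upper_iff is_matching_def)
qed

definition has_matched_nets :: "('a \<Rightarrow> 'a \<Rightarrow> ennreal) \<Rightarrow> 'a set \<Rightarrow> 'a diag set \<Rightarrow> bool" where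
  "has_matched_nets d A S \<longleftrightarrow> (\<forall>\<epsilon>::real. 0 < \<epsilon> \<longrightarrow>
     (\<exists>F. finite F \<and> F \<subseteq> S \<and> (\<forall>\<beta>\<in>S. \<exists>\<alpha>\<in>F. matched_within d A (ennreal \<epsilon>) \<alpha> \<beta>)))"

lemma has_matched_nets_if_totally_bounded:
  assumes "totally_bounded_wrt W S"
    and "\<And>\<alpha> \<beta> e. 0 < e \<Longrightarrow> W \<alpha> \<beta> < ennreal e \<Longrightarrow> matched_within d A (ennreal e) \<alpha> \<beta>"
  shows "has_matched_nets d A S"
  unfolding has_matched_nets_def
proof (intro allI impI)
  fix \<epsilon> :: real assume "0 < \<epsilon>"
  then obtain F where F: "finite F" "F \<subseteq> S" "S \<subseteq> (\<Union>\<alpha>\<in>F. {\<beta>. W \<alpha> \<beta> < ennreal \<epsilon>})"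
    using assms(1) unfolding totally_bounded_wrt_def by meson
  show "\<exists>F. finite F \<and> F \<subseteq> S \<and> (\<forall>\<beta>\<in>S. \<exists>\<alpha>\<in>F. matched_within d A (ennreal \<epsilon>) \<alpha> \<beta>)"
  proof (intro exI[of _ F] conjI ballI)
    fix \<beta> assume "\<beta> \<in> S"
    then obtain \<alpha> where "\<alpha> \<in> F" "W \<alpha> \<beta> < ennreal \<epsilon>" using F(3) by blast
    then show "\<exists>\<alpha>\<in>F. matched_within d A (ennreal \<epsilon>) \<alpha> \<beta>" using assms(2) \<open>0 < \<epsilon>\<close> by blast
  qed (use F in auto)
qed

lemma unif_upper_finite_if_matched_nets:
  assumes em: "ext_metric d" and S: "S \<subseteq> D_inf d A" and nets: "has_matched_nets d A S"
  shows "unif_upper_finite d A S"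
  unfolding unif_upper_finite_def
proof (intro allI impI)
  fix \<epsilon> :: real assume "0 < \<epsilon>"
  then obtain F where F: "finite F" "F \<subseteq> S" "\<forall>\<beta>\<in>S. \<exists>\<alpha>\<in>F. matched_within d A (ennreal (\<epsilon>/2)) \<alpha> \<beta>"
    using nets unfolding has_matched_nets_def by (meson half_gt_zero)
  let ?U = "\<lambda>\<alpha>. fst (upper d A (ennreal (\<epsilon>/2)) \<alpha>)"
  have finU: "finite (?U \<alpha>)" if "\<alpha> \<in> F" for \<alpha>
    using that F(2) S \<open>0 < \<epsilon>\<close> by (auto simp: D_inf_def)
  show "\<exists>M. \<forall>\<beta>\<in>S. finite (fst (upper d A (ennreal \<epsilon>) \<beta>)) \<and> card (fst (upper d A (ennreal \<epsilon>) \<beta>)) \<le> M"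
  proof (intro exI ballI)
    fix \<beta> assume "\<beta> \<in> S"
    then obtain \<alpha> where \<alpha>: "\<alpha> \<in> F" and "matched_within d A (ennreal (\<epsilon>/2)) \<alpha> \<beta>"
      using F(3) by blast
    then obtain K \<phi> z w where m: "is_matching A \<alpha> \<beta> K \<phi> z w"
      and close: "\<forall>k\<in>K. d (snd \<alpha> k) (snd \<beta> (\<phi> k)) < ennreal (\<epsilon>/2)"
        "\<forall>j\<in>fst \<beta> - \<phi> ` K. d (w j) (snd \<beta> j) < ennreal (\<epsilon>/2)"
      unfolding matched_within_def by blast
    have sub: "fst (upper d A (ennreal \<epsilon>) \<beta>) \<subseteq> \<phi> ` (K \<inter> ?U \<alpha>)"
      using upper_subset_image_matching[OF em m close, of "\<epsilon>/2" \<epsilon>] \<open>0 < \<epsilon>\<close> by simp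
    have "card (fst (upper d A (ennreal \<epsilon>) \<beta>)) \<le> card (?U \<alpha>)"
      using sub finU[OF \<alpha>]
      by (meson card_image_le card_mono finite_Int finite_imageI inf_le2 order_trans)
    also have "\<dots> \<le> (\<Sum>\<alpha>\<in>F. card (?U \<alpha>))"
      using F(1) \<alpha> by (intro member_le_sum) auto
    finally show "finite (fst (upper d A (ennreal \<epsilon>) \<beta>))
        \<and> card (fst (upper d A (ennreal \<epsilon>) \<beta>)) \<le> (\<Sum>\<alpha>\<in>F. card (?U \<alpha>))"
      using sub finU[OF \<alpha>] finite_subset by blast
  qed
qed

lemma upper_tot_bounded_if_matched_nets:
  assumes em: "ext_metric d" and S: "S \<subseteq> D_inf d A" and nets: "has_matched_nets d A S"
  shows "upper_tot_bounded d A S"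
  unfolding upper_tot_bounded_def
proof (intro allI impI totally_bounded_wrt_if_nets[OF em])
  fix \<epsilon> \<eta> :: real assume "0 < \<epsilon>" "0 < \<eta>"
  define e where "e = min (\<epsilon>/2) \<eta>"
  have e: "0 < e" "e + e \<le> \<epsilon>" "e \<le> \<eta>" using \<open>0 < \<epsilon>\<close> \<open>0 < \<eta>\<close> by (auto simp: e_def)
  obtain F where F: "finite F" "F \<subseteq> S" "\<forall>\<beta>\<in>S. \<exists>\<alpha>\<in>F. matched_within d A (ennreal e) \<alpha> \<beta>"
    using nets e(1) unfolding has_matched_nets_def by meson
  define C where "C = (\<Union>\<alpha>\<in>F. supp (upper d A (ennreal e) \<alpha>))"
  show "\<exists>C. finite C \<and> (\<forall>q\<in>\<Union>\<beta>\<in>S. supp (upper d A (ennreal \<epsilon>) \<beta>). \<exists>c\<in>C. d c q < ennreal \<eta>)"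
  proof (intro exI conjI ballI)
    show "finite C"
      unfolding C_def supp_upper using F S e(1)
      by (intro finite_UN_I finite_imageI) (auto simp: D_inf_def)
    fix q assume "q \<in> (\<Union>\<beta>\<in>S. supp (upper d A (ennreal \<epsilon>) \<beta>))"
    then obtain \<beta> j where \<beta>: "\<beta> \<in> S" "j \<in> fst (upper d A (ennreal \<epsilon>) \<beta>)" "q = snd \<beta> j"
      unfolding supp_upper by blast
    then obtain \<alpha> where \<alpha>: "\<alpha> \<in> F" and "matched_within d A (ennreal e) \<alpha> \<beta>"
      using F(3) by blast
    then obtain K \<phi> z w where m: "is_matching A \<alpha> \<beta> K \<phi> z w"
      and close: "\<forall>k\<in>K. d (snd \<alpha> k) (snd \<beta> (\<phi> k)) < ennreal e"
        "\<forall>j\<in>fst \<beta> - \<phi> ` K. d (w j) (snd \<beta> j) < ennreal e"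
      unfolding matched_within_def by blast
    obtain k where k: "k \<in> K" "k \<in> fst (upper d A (ennreal e) \<alpha>)" "j = \<phi> k"
      using upper_subset_image_matching[OF em m close, of e \<epsilon>] e \<beta>(2) by auto
    show "\<exists>c\<in>C. d c q < ennreal \<eta>"
    proof
      show "snd \<alpha> k \<in> C" unfolding C_def supp_upper using \<alpha> k by auto
      show "d (snd \<alpha> k) q < ennreal \<eta>"
        using close(1) k \<beta>(3) ennreal_leI[OF e(3)] by (auto intro: order_less_le_trans)
    qed
  qed
qed

lemma upper_bounds_if_totally_bounded:
  assumes "ext_metric d" "S \<subseteq> D_inf d A" "totally_bounded_wrt W S"
    and "\<And>\<alpha> \<beta> e. 0 < e \<Longrightarrow> W \<alpha> \<beta> < ennreal e \<Longrightarrow> matched_within d A (ennreal e) \<alpha> \<beta>"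
  shows "unif_upper_finite d A S \<and> upper_tot_bounded d A S"
  using has_matched_nets_if_totally_bounded[OF assms(3,4)]
    unif_upper_finite_if_matched_nets[OF assms(1,2)] upper_tot_bounded_if_matched_nets[OF assms(1,2)]
  by blast

section \<open>Necessity of uniform p-vanishing\<close>

lemma infsum_reassignment_le:
  assumes em: "ext_metric d" and p: "0 \<le> p" and \<delta>: "0 \<le> \<delta>"
    and inj: "inj_on \<phi> K" and L: "L \<subseteq> fst \<beta>" and N: "finite (K - L\<^sub>\<alpha>)" "card (K - L\<^sub>\<alpha>) \<le> N"
    and unmatched: "\<forall>j\<in>fst \<beta> - \<phi> ` K. z' j = w j"
    and via_\<zeta>: "\<forall>k\<in>K \<inter> L\<^sub>\<alpha>. z' (\<phi> k) = \<zeta> k"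
    and near: "\<forall>j\<in>L \<inter> \<phi> ` (K - L\<^sub>\<alpha>). d (snd \<beta> j) (z' j) \<le> ennreal \<delta>"
  shows "(\<Sum>\<^sub>\<infinity>j\<in>L. enn_powr (d (snd \<beta> j) (z' j)) p)
       \<le> (\<Sum>\<^sub>\<infinity>j\<in>fst \<beta> - \<phi> ` K. enn_powr (d (w j) (snd \<beta> j)) p)
         + ennreal (2 powr p) * ((\<Sum>\<^sub>\<infinity>k\<in>K. enn_powr (d (snd \<alpha> k) (snd \<beta> (\<phi> k))) p)
                                 + (\<Sum>\<^sub>\<infinity>k\<in>L\<^sub>\<alpha>. enn_powr (d (snd \<alpha> k) (\<zeta> k)) p))
         + of_nat N * ennreal (\<delta> powr p)"
    (is "infsum ?g L \<le> _")
proof -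
  have "L \<subseteq> (fst \<beta> - \<phi> ` K) \<union> \<phi> ` (K \<inter> L\<^sub>\<alpha>) \<union> (L \<inter> \<phi> ` (K - L\<^sub>\<alpha>))" using L by blast
  then have "infsum ?g L \<le> infsum ?g (fst \<beta> - \<phi> ` K) + infsum ?g (\<phi> ` (K \<inter> L\<^sub>\<alpha>))
      + infsum ?g (L \<inter> \<phi> ` (K - L\<^sub>\<alpha>))"
    by (meson add_right_mono infsum_Un_le_ennreal infsum_subset_ennreal order_trans)
  also have "infsum ?g (fst \<beta> - \<phi> ` K) = (\<Sum>\<^sub>\<infinity>j\<in>fst \<beta> - \<phi> ` K. enn_powr (d (w j) (snd \<beta> j)) p)"
    using unmatched ext_metric_sym[OF em] by (intro infsum_cong) simp
  also have "infsum ?g (\<phi> ` (K \<inter> L\<^sub>\<alpha>)) = (\<Sum>\<^sub>\<infinity>k\<in>K \<inter> L\<^sub>\<alpha>. enn_powr (d (snd \<beta> (\<phi> k)) (\<zeta> k)) p)"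
    using inj via_\<zeta> by (subst infsum_reindex) (auto intro: inj_on_subset intro!: infsum_cong)
  also have "\<dots> \<le> ennreal (2 powr p) * ((\<Sum>\<^sub>\<infinity>k\<in>K \<inter> L\<^sub>\<alpha>. enn_powr (d (snd \<alpha> k) (snd \<beta> (\<phi> k))) p)
                              + (\<Sum>\<^sub>\<infinity>k\<in>K \<inter> L\<^sub>\<alpha>. enn_powr (d (snd \<alpha> k) (\<zeta> k)) p))"
    by (rule infsum_dist_powr_triangle[OF em p])
  also have "\<dots> \<le> ennreal (2 powr p) * ((\<Sum>\<^sub>\<infinity>k\<in>K. enn_powr (d (snd \<alpha> k) (snd \<beta> (\<phi> k))) p)
                              + (\<Sum>\<^sub>\<infinity>k\<in>L\<^sub>\<alpha>. enn_powr (d (snd \<alpha> k) (\<zeta> k)) p))"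
    by (intro mult_left_mono add_mono infsum_subset_ennreal) auto
  also have "infsum ?g (L \<inter> \<phi> ` (K - L\<^sub>\<alpha>)) \<le> of_nat N * ennreal (\<delta> powr p)"
  proof (rule infsum_le_of_card_le_ennreal)
    have "card (L \<inter> \<phi> ` (K - L\<^sub>\<alpha>)) \<le> card (\<phi> ` (K - L\<^sub>\<alpha>))"
      using N(1) by (intro card_mono) auto
    then show "card (L \<inter> \<phi> ` (K - L\<^sub>\<alpha>)) \<le> N"
      using N card_image_le[OF N(1), of \<phi>] by linarith
  qed (use N(1) near p \<delta> in \<open>auto intro: enn_powr_le_ennreal_powr\<close>)
  finally show ?thesis by (simp add: add_mono)
qed

lemma lower_assignment_through_matching:
  assumes em: "ext_metric d" and p: "0 \<le> p" and m: "is_matching A \<alpha> \<beta> K \<phi> z w"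
    and L: "L \<subseteq> fst \<beta>" and \<zeta>: "\<forall>k\<in>L\<^sub>\<alpha>. \<zeta> k \<in> A"
    and a: "\<And>j. j \<in> L \<Longrightarrow> a j \<in> A \<and> d (snd \<beta> j) (a j) < ennreal \<delta>" and \<delta>: "0 \<le> \<delta>"
    and N: "finite (K - L\<^sub>\<alpha>)" "card (K - L\<^sub>\<alpha>) \<le> N"
  obtains z' where "\<forall>j\<in>L. z' j \<in> A"
    "(\<Sum>\<^sub>\<infinity>j\<in>L. enn_powr (d (snd \<beta> j) (z' j)) p)
       \<le> (\<Sum>\<^sub>\<infinity>j\<in>fst \<beta> - \<phi> ` K. enn_powr (d (w j) (snd \<beta> j)) p)
         + ennreal (2 powr p) * ((\<Sum>\<^sub>\<infinity>k\<in>K. enn_powr (d (snd \<alpha> k) (snd \<beta> (\<phi> k))) p)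
                                 + (\<Sum>\<^sub>\<infinity>k\<in>L\<^sub>\<alpha>. enn_powr (d (snd \<alpha> k) (\<zeta> k)) p))
         + of_nat N * ennreal (\<delta> powr p)"
proof -
  have inj: "inj_on \<phi> K" and w: "\<forall>j\<in>fst \<beta> - \<phi> ` K. w j \<in> A"
    using m by (auto simp: is_matching_def)
  define \<iota> where "\<iota> = inv_into K \<phi>"
  have \<iota>: "\<iota> (\<phi> k) = k" if "k \<in> K" for k
    using inj that by (simp add: \<iota>_def)
  \<comment> \<open>a point of \<beta> matched into the index set of \<zeta> follows its partner to \<zeta>;
    the other matched points go to the nearby a\<close>
  define z' where "z' j = (if j \<in> \<phi> ` K then if \<iota> j \<in> L\<^sub>\<alpha> then \<zeta> (\<iota> j) else a j else w j)" for j
  show thesis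
  proof (rule that)
    show "\<forall>j\<in>L. z' j \<in> A" using L \<zeta> a w \<iota> by (auto simp: z'_def)
  qed (use a \<iota> in \<open>intro infsum_reassignment_le[OF em p \<delta> inj L N],
              auto simp: z'_def less_imp_le dest: inj_onD[OF inj]\<close>)
qed

lemma lower_assignment_small_if_matched:
  assumes em: "ext_metric d" and p: "0 < p" and \<alpha>: "\<alpha> \<in> diagrams A"
    and m: "is_matching A \<alpha> \<beta> K \<phi> z w" and cost: "cost_powr d p \<alpha> \<beta> K \<phi> z w < ennreal r"
    and \<zeta>: "\<forall>i\<in>fst (lower d A \<delta>\<^sub>\<alpha> \<alpha>). \<zeta> i \<in> A"
    and tail: "(\<Sum>\<^sub>\<infinity>i\<in>fst (lower d A \<delta>\<^sub>\<alpha> \<alpha>). enn_powr (d (snd \<alpha> i) (\<zeta> i)) p) < ennreal r"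
    and upper: "finite (fst (upper d A \<delta>\<^sub>\<alpha> \<alpha>))" "card (fst (upper d A \<delta>\<^sub>\<alpha> \<alpha>)) \<le> N"
    and \<delta>: "0 < \<delta>" "real N * \<delta> powr p \<le> r"
  obtains z' where "\<forall>j\<in>fst (lower d A (ennreal \<delta>) \<beta>). z' j \<in> A"
    "(\<Sum>\<^sub>\<infinity>j\<in>fst (lower d A (ennreal \<delta>) \<beta>). enn_powr (d (snd \<beta> j) (z' j)) p) < ennreal (4 * 2 powr p * r)"
proof -
  let ?L = "fst (lower d A (ennreal \<delta>) \<beta>)"
  obtain a where a: "\<And>j. j \<in> ?L \<Longrightarrow> a j \<in> A \<and> d (snd \<beta> j) (a j) < ennreal \<delta>"
    using lower_near_points[of d A "ennreal \<delta>" \<beta>] by blast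
  have L: "?L \<subseteq> fst \<beta>" by (auto simp: mem_lower_iff)
  have "K - fst (lower d A \<delta>\<^sub>\<alpha> \<alpha>) \<subseteq> fst (upper d A \<delta>\<^sub>\<alpha> \<alpha>)"
    using m lower_eq_diff_upper[OF \<alpha>] by (auto simp: is_matching_def)
  then have N: "finite (K - fst (lower d A \<delta>\<^sub>\<alpha> \<alpha>))" "card (K - fst (lower d A \<delta>\<^sub>\<alpha> \<alpha>)) \<le> N"
    using finite_subset[OF _ upper(1)] order_trans[OF card_mono[OF upper(1)] upper(2)] by blast+
  obtain z' where z': "\<forall>j\<in>?L. z' j \<in> A"
    and bound: "(\<Sum>\<^sub>\<infinity>j\<in>?L. enn_powr (d (snd \<beta> j) (z' j)) p)
       \<le> (\<Sum>\<^sub>\<infinity>j\<in>fst \<beta> - \<phi> ` K. enn_powr (d (w j) (snd \<beta> j)) p)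
         + ennreal (2 powr p) * ((\<Sum>\<^sub>\<infinity>k\<in>K. enn_powr (d (snd \<alpha> k) (snd \<beta> (\<phi> k))) p)
                                 + (\<Sum>\<^sub>\<infinity>k\<in>fst (lower d A \<delta>\<^sub>\<alpha> \<alpha>). enn_powr (d (snd \<alpha> k) (\<zeta> k)) p))
         + of_nat N * ennreal (\<delta> powr p)" (is "_ \<le> ?X + ennreal (2 powr p) * (?Y + ?Z) + _")
    using lower_assignment_through_matching[OF em less_imp_le[OF p] m L \<zeta> a less_imp_le[OF \<delta>(1)] N]
    by blast
  have "?X \<le> cost_powr d p \<alpha> \<beta> K \<phi> z w" "?Y \<le> cost_powr d p \<alpha> \<beta> K \<phi> z w"
    unfolding cost_powr_def by (simp_all add: add.assoc)
  then have X: "?X < ennreal r" and Y: "?Y < ennreal r"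
    using cost by (auto intro: order_le_less_trans)
  have r: "0 < r" using order_le_less_trans[OF zero_le cost] by simp
  have "ennreal (2 powr p) * (?Y + ?Z) \<le> ennreal (2 powr p) * ennreal (r + r)"
    using add_mono_ennreal[OF Y tail] by (intro mult_left_mono) auto
  then have "ennreal (2 powr p) * (?Y + ?Z) \<le> ennreal (2 powr p * (r + r))"
    using r by (simp add: ennreal_mult)
  moreover have "of_nat N * ennreal (\<delta> powr p) \<le> ennreal r"
    using \<delta>(2) by (simp add: ennreal_of_nat_eq_real_of_nat ennreal_leI flip: ennreal_mult)
  ultimately have "?X + ennreal (2 powr p) * (?Y + ?Z) + of_nat N * ennreal (\<delta> powr p)
      < ennreal (r + 2 powr p * (r + r) + r)"
    using X r by (intro ennreal_add_less_le) auto
  also have "\<dots> \<le> ennreal (4 * 2 powr p * r)"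
    using ge_one_powr_ge_zero[of 2 p] p r by (intro ennreal_leI) (auto simp: algebra_simps)
  finally show thesis
    using that[OF z'] bound by (meson order_le_less_trans)
qed

lemma unif_p_vanishing_if_totally_bounded:
  assumes mp: "metric_pair d A" and p: "0 < p" and S: "S \<subseteq> D_p d A p"
    and tb: "totally_bounded_wrt (W_p d A p) S"
  shows "unif_p_vanishing d A p S"
  unfolding unif_p_vanishing_def
proof (intro allI impI)
  fix \<epsilon> :: real assume "0 < \<epsilon>"
  have em: "ext_metric d" using mp by (simp add: metric_pair_def)
  define r where "r = \<epsilon> powr p / (4 * 2 powr p)"
  define e where "e = r powr (1 / p)"
  have r: "0 < r" "4 * 2 powr p * r = \<epsilon> powr p" using \<open>0 < \<epsilon>\<close> by (auto simp: r_def)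
  have e: "0 < e" "e powr p = r" using r(1) p by (auto simp: e_def powr_powr)
  obtain F where F: "finite F" "F \<subseteq> S" "S \<subseteq> (\<Union>\<alpha>\<in>F. {\<beta>. W_p d A p \<alpha> \<beta> < ennreal e})"
    using tb e(1) unfolding totally_bounded_wrt_def by meson
  obtain \<delta>\<^sub>F \<zeta> where \<delta>\<^sub>F: "0 < \<delta>\<^sub>F"
    and tail: "\<And>\<alpha>. \<alpha> \<in> F \<Longrightarrow> \<forall>i\<in>fst (lower d A (ennreal \<delta>\<^sub>F) \<alpha>). \<zeta> \<alpha> i \<in> A"
      "\<And>\<alpha>. \<alpha> \<in> F \<Longrightarrow> (\<Sum>\<^sub>\<infinity>i\<in>fst (lower d A (ennreal \<delta>\<^sub>F) \<alpha>). enn_powr (d (snd \<alpha> i) (\<zeta> \<alpha> i)) p) < ennreal r"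
    using D_p_lower_tails_finite[OF mp p F(1) _ ennreal_less_zero_iff[THEN iffD2, OF r(1)]] F(2) S by blast
  define N where "N = (\<Sum>\<alpha>\<in>F. card (fst (upper d A (ennreal \<delta>\<^sub>F) \<alpha>)))"
  define \<delta> where "\<delta> = (r / (real N + 1)) powr (1 / p)"
  have \<delta>: "0 < \<delta>" "real N * \<delta> powr p \<le> r"
    using r(1) p by (auto simp: \<delta>_def powr_powr field_simps)
  show "\<exists>\<delta>>0. \<forall>\<beta>\<in>S. W_p d A p (lower d A (ennreal \<delta>) \<beta>) zero_diag < ennreal \<epsilon>"
  proof (intro exI[of _ \<delta>] conjI ballI)
    fix \<beta> assume "\<beta> \<in> S"
    then obtain \<alpha> where \<alpha>: "\<alpha> \<in> F" "W_p d A p \<alpha> \<beta> < ennreal e" using F(3) by blast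
    then obtain K \<phi> z w where m: "is_matching A \<alpha> \<beta> K \<phi> z w" and "cost_powr d p \<alpha> \<beta> K \<phi> z w < ennreal r"
      using \<alpha>(2) unfolding W_p_less_iff[OF p e(1)] e(2) by blast
    moreover have \<alpha>D: "\<alpha> \<in> D_p d A p" using \<alpha>(1) F(2) S by blast
    moreover have "card (fst (upper d A (ennreal \<delta>\<^sub>F) \<alpha>)) \<le> N"
      unfolding N_def using F(1) \<alpha>(1) by (intro member_le_sum) auto
    ultimately obtain z' where "\<forall>j\<in>fst (lower d A (ennreal \<delta>) \<beta>). z' j \<in> A"
      "(\<Sum>\<^sub>\<infinity>j\<in>fst (lower d A (ennreal \<delta>) \<beta>). enn_powr (d (snd \<beta> j) (z' j)) p) < ennreal (\<epsilon> powr p)"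
      using lower_assignment_small_if_matched[OF em p _ m _ tail[OF \<alpha>(1)]
          finite_upper_if_D_p[OF p \<alpha>D \<delta>\<^sub>F] _ \<delta>] r(2)
      by (auto simp: D_p_def)
    then show "W_p d A p (lower d A (ennreal \<delta>) \<beta>) zero_diag < ennreal \<epsilon>"
      unfolding W_p_zero_less_iff[OF p \<open>0 < \<epsilon>\<close>] by auto
  qed (rule \<delta>(1))
qed

section \<open>Sufficiency of the conditions\<close>

lemma bij_betw_preserving_labels:
  assumes "finite I" "finite J" "\<And>c. card {i\<in>I. f i = c} = card {j\<in>J. g j = c}"
  obtains \<psi> where "bij_betw \<psi> I J" "\<And>i. i \<in> I \<Longrightarrow> g (\<psi> i) = f i"
proof -
  have "\<exists>h. bij_betw h {i\<in>I. f i = c} {j\<in>J. g j = c}" for c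
    using assms by (intro finite_same_card_bij) auto
  then obtain h where h: "\<And>c. bij_betw (h c) {i\<in>I. f i = c} {j\<in>J. g j = c}"
    by metis
  define \<psi> where "\<psi> i = h (f i) i" for i
  have \<psi>: "\<psi> i \<in> J \<and> g (\<psi> i) = f i" if "i \<in> I" for i
    using bij_betwE[OF h[of "f i"]] that by (auto simp: \<psi>_def)
  have "inj_on \<psi> I"
  proof (rule inj_onI)
    fix i i' assume i: "i \<in> I" "i' \<in> I" "\<psi> i = \<psi> i'"
    then have "f i = f i'" using \<psi>[of i] \<psi>[of i'] by simp
    with i show "i = i'"
      using bij_betw_imp_inj_on[OF h[of "f i"]] unfolding \<psi>_def inj_on_def by auto
  qed
  moreover have "J \<subseteq> \<psi> ` I"
  proof
    fix j assume "j \<in> J"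
    then have "j \<in> h (g j) ` {i\<in>I. f i = g j}"
      using bij_betw_imp_surj_on[OF h[of "g j"]] by simp
    then obtain i where "i \<in> I" "f i = g j" "j = h (g j) i" by blast
    then show "j \<in> \<psi> ` I" by (intro image_eqI[where x = i]) (auto simp: \<psi>_def)
  qed
  ultimately have "bij_betw \<psi> I J" using \<psi> by (auto simp: bij_betw_def)
  with \<psi> show thesis using that by blast
qed

lemma finite_fibre_card_patterns:
  assumes "finite C" "\<And>s. s \<in> S \<Longrightarrow> finite (U s) \<and> card (U s) \<le> M"
    and "\<And>s j. s \<in> S \<Longrightarrow> j \<in> U s \<Longrightarrow> ch s j \<in> C"
  shows "finite ((\<lambda>s c. card {j\<in>U s. ch s j = c}) ` S)"
proof (rule finite_subset[OF _ finite_set_of_finite_funs[OF assms(1), of "{0..M}" 0]])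
  show "(\<lambda>s c. card {j\<in>U s. ch s j = c}) ` S
      \<subseteq> {f. \<forall>c. (c \<in> C \<longrightarrow> f c \<in> {0..M}) \<and> (c \<notin> C \<longrightarrow> f c = 0)}"
  proof (safe)
    fix s c assume s: "s \<in> S"
    show "card {j\<in>U s. ch s j = c} \<in> {0..M}"
      using assms(2)[OF s] card_mono[of "U s" "{j\<in>U s. ch s j = c}"] by auto
    show "card {j\<in>U s. ch s j = c} = 0" if "c \<notin> C"
    proof -
      have "{j\<in>U s. ch s j = c} = {}" using assms(3)[OF s] that by blast
      then show ?thesis by (simp only: card.empty)
    qed
  qed
qed simp

lemma finite_net_of_configurations:
  fixes U :: "'i \<Rightarrow> 'k set" and x :: "'i \<Rightarrow> 'k \<Rightarrow> 'a"
  assumes em: "ext_metric d"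
    and fin: "\<And>s. s \<in> S \<Longrightarrow> finite (U s) \<and> card (U s) \<le> M"
    and tb: "totally_bounded_wrt d (\<Union>s\<in>S. x s ` U s)" and \<eta>: "0 < \<eta>"
  obtains F where "finite F" "F \<subseteq> S"
    "\<And>s. s \<in> S \<Longrightarrow> \<exists>t\<in>F. \<exists>\<psi>. bij_betw \<psi> (U t) (U s)
        \<and> (\<forall>k\<in>U t. d (x t k) (x s (\<psi> k)) < ennreal (2 * \<eta>))"
proof -
  obtain C where C: "finite C" "(\<Union>s\<in>S. x s ` U s) \<subseteq> (\<Union>c\<in>C. {q. d c q < ennreal \<eta>})"
    using tb \<eta> unfolding totally_bounded_wrt_def by meson
  then have "\<forall>s\<in>S. \<forall>j\<in>U s. \<exists>c. c \<in> C \<and> d c (x s j) < ennreal \<eta>" by blast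
  then obtain ch where ch: "\<And>s j. s \<in> S \<Longrightarrow> j \<in> U s \<Longrightarrow> ch s j \<in> C \<and> d (ch s j) (x s j) < ennreal \<eta>"
    by metis
  \<comment> \<open>configurations with the same number of points near each centre of the net are close\<close>
  define pattern where "pattern s c = card {j\<in>U s. ch s j = c}" for s c
  have "ch s j \<in> C" if "s \<in> S" "j \<in> U s" for s j
    using ch[OF that] by blast
  with C(1) fin have "finite (pattern ` S)"
    unfolding pattern_def by (rule finite_fibre_card_patterns)
  then obtain F where F: "F \<subseteq> S" "finite F" "pattern ` S = pattern ` F"
    using finite_subset_image[of "pattern ` S" pattern S] by blast
  show thesis
  proof (rule that[OF F(2,1)])
    fix s assume s: "s \<in> S"
    then have "pattern s \<in> pattern ` F" using F(3) by blast
    then obtain t where t: "t \<in> F" "pattern t = pattern s" by (auto simp: image_iff)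
    have tS: "t \<in> S" using t F(1) by blast
    have "card {k\<in>U t. ch t k = c} = card {j\<in>U s. ch s j = c}" for c
      using fun_cong[OF t(2), of c] unfolding pattern_def .
    then obtain \<psi> where \<psi>: "bij_betw \<psi> (U t) (U s)" "\<And>k. k \<in> U t \<Longrightarrow> ch s (\<psi> k) = ch t k"
      using bij_betw_preserving_labels fin[OF tS] fin[OF s] by blast
    have "d (x t k) (x s (\<psi> k)) < ennreal (2 * \<eta>)" if k: "k \<in> U t" for k
    proof -
      have "\<psi> k \<in> U s" using bij_betwE[OF \<psi>(1)] k by blast
      have "d (x t k) (x s (\<psi> k)) \<le> d (x t k) (ch t k) + d (ch t k) (x s (\<psi> k))"
        by (rule ext_metric_triangle[OF em])
      also have "\<dots> < ennreal (\<eta> + \<eta>)"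
        using ch[OF tS k] ch[OF s \<open>\<psi> k \<in> U s\<close>] \<psi>(2)[OF k] ext_metric_sym[OF em, of "x t k"]
        by (intro add_mono_ennreal) auto
      finally show ?thesis by simp
    qed
    with t(1) \<psi>(1) show "\<exists>t\<in>F. \<exists>\<psi>. bij_betw \<psi> (U t) (U s) \<and> (\<forall>k\<in>U t. d (x t k) (x s (\<psi> k)) < ennreal (2 * \<eta>))"
      by blast
  qed
qed

lemma upper_bijection_nets:
  assumes em: "ext_metric d" and uuf: "unif_upper_finite d A S" and utb: "upper_tot_bounded d A S"
    and \<delta>: "0 < \<delta>"
  obtains M where
    "\<And>\<alpha>. \<alpha> \<in> S \<Longrightarrow> finite (fst (upper d A (ennreal \<delta>) \<alpha>)) \<and> card (fst (upper d A (ennreal \<delta>) \<alpha>)) \<le> M"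
    "\<And>\<eta>. 0 < \<eta> \<Longrightarrow> \<exists>F. finite F \<and> F \<subseteq> S \<and> (\<forall>\<beta>\<in>S. \<exists>\<alpha>\<in>F. \<exists>\<psi>.
        bij_betw \<psi> (fst (upper d A (ennreal \<delta>) \<alpha>)) (fst (upper d A (ennreal \<delta>) \<beta>))
        \<and> (\<forall>k\<in>fst (upper d A (ennreal \<delta>) \<alpha>). d (snd \<alpha> k) (snd \<beta> (\<psi> k)) < ennreal (2 * \<eta>)))"
proof -
  let ?U = "\<lambda>\<alpha>. fst (upper d A (ennreal \<delta>) \<alpha>)"
  obtain M where M: "\<And>\<alpha>. \<alpha> \<in> S \<Longrightarrow> finite (?U \<alpha>) \<and> card (?U \<alpha>) \<le> M"
    using uuf \<delta> unfolding unif_upper_finite_def by meson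
  have tb: "totally_bounded_wrt d (\<Union>\<alpha>\<in>S. snd \<alpha> ` ?U \<alpha>)"
    using utb \<delta> unfolding upper_tot_bounded_def supp_upper by blast
  show thesis
  proof (rule that[OF M])
    fix \<eta> :: real assume "0 < \<eta>"
    obtain F where "finite F" "F \<subseteq> S" "\<And>\<beta>. \<beta> \<in> S \<Longrightarrow> \<exists>\<alpha>\<in>F. \<exists>\<psi>. bij_betw \<psi> (?U \<alpha>) (?U \<beta>)
        \<and> (\<forall>k\<in>?U \<alpha>. d (snd \<alpha> k) (snd \<beta> (\<psi> k)) < ennreal (2 * \<eta>))"
      using finite_net_of_configurations[of d S ?U M snd \<eta>] em M tb \<open>0 < \<eta>\<close> by blast
    then show "\<exists>F. finite F \<and> F \<subseteq> S \<and> (\<forall>\<beta>\<in>S. \<exists>\<alpha>\<in>F. \<exists>\<psi>. bij_betw \<psi> (?U \<alpha>) (?U \<beta>)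
        \<and> (\<forall>k\<in>?U \<alpha>. d (snd \<alpha> k) (snd \<beta> (\<psi> k)) < ennreal (2 * \<eta>)))"
      by blast
  qed
qed

lemma totally_bounded_W_inf_if_upper_bounds:
  assumes em: "ext_metric d" and S: "S \<subseteq> diagrams A"
    and uuf: "unif_upper_finite d A S" and utb: "upper_tot_bounded d A S"
  shows "totally_bounded_wrt (W_inf d A) S"
  unfolding totally_bounded_wrt_def
proof (intro allI impI)
  fix \<epsilon> :: real assume "0 < \<epsilon>"
  define \<delta> where "\<delta> = \<epsilon> / 4"
  have \<delta>: "0 < \<delta>" "2 * \<delta> < \<epsilon>" using \<open>0 < \<epsilon>\<close> by (auto simp: \<delta>_def)
  define U where "U \<alpha> = fst (upper d A (ennreal \<delta>) \<alpha>)" for \<alpha>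
  obtain F where F: "finite F" "F \<subseteq> S" "\<forall>\<beta>\<in>S. \<exists>\<alpha>\<in>F. \<exists>\<psi>. bij_betw \<psi> (U \<alpha>) (U \<beta>)
      \<and> (\<forall>k\<in>U \<alpha>. d (snd \<alpha> k) (snd \<beta> (\<psi> k)) < ennreal (2 * \<delta>))"
    using upper_bijection_nets[OF em uuf utb \<delta>(1)] \<delta>(1) unfolding U_def by metis
  have "\<exists>z. \<forall>i\<in>fst (lower d A (ennreal \<delta>) \<alpha>). z i \<in> A \<and> d (snd \<alpha> i) (z i) < ennreal \<delta>" for \<alpha>
    using lower_near_points by metis
  then obtain near where near: "\<And>\<alpha> i. i \<in> fst (lower d A (ennreal \<delta>) \<alpha>)
      \<Longrightarrow> near \<alpha> i \<in> A \<and> d (snd \<alpha> i) (near \<alpha> i) < ennreal \<delta>"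
    by metis
  show "\<exists>F. finite F \<and> F \<subseteq> S \<and> S \<subseteq> (\<Union>\<alpha>\<in>F. {\<beta>. W_inf d A \<alpha> \<beta> < ennreal \<epsilon>})"
  proof (intro exI conjI subsetI)
    fix \<beta> assume "\<beta> \<in> S"
    then obtain \<alpha> \<psi> where \<alpha>: "\<alpha> \<in> F" and \<psi>: "bij_betw \<psi> (U \<alpha>) (U \<beta>)"
      and close: "\<forall>k\<in>U \<alpha>. d (snd \<alpha> k) (snd \<beta> (\<psi> k)) < ennreal (2 * \<delta>)"
      using F(3) by blast
    have diag: "\<alpha> \<in> diagrams A" "\<beta> \<in> diagrams A" using \<alpha> \<open>\<beta> \<in> S\<close> F(2) S by auto
    have m: "is_matching A \<alpha> \<beta> (U \<alpha>) \<psi> (near \<alpha>) (near \<beta>)"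
      unfolding U_def using diag \<psi> near by (intro is_matching_upper_bijection) (auto simp: U_def)
    have "\<psi> ` U \<alpha> = U \<beta>" using \<psi> by (simp add: bij_betw_def)
    then have "cost_inf d \<alpha> \<beta> (U \<alpha>) \<psi> (near \<alpha>) (near \<beta>) \<le> ennreal (2 * \<delta>)"
      unfolding cost_inf_def
      using close near[of _ \<alpha>] near[of _ \<beta>] diag \<delta>(1) ext_metric_sym[OF em]
      by (intro sup_least SUP_least)
         (auto simp: U_def lower_eq_diff_upper intro!: order.strict_implies_order
               intro: order_less_le_trans[OF _ ennreal_leI[of \<delta> "2 * \<delta>"]])
    also have "\<dots> < ennreal \<epsilon>" using \<delta> by (simp add: ennreal_less_iff)
    finally show "\<beta> \<in> (\<Union>\<alpha>\<in>F. {\<beta>. W_inf d A \<alpha> \<beta> < ennreal \<epsilon>})"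
      using \<alpha> order_le_less_trans[OF W_inf_le_cost_inf[OF m]] by blast
  qed (use F in auto)
qed

lemma unif_p_vanishing_lower_assignments:
  assumes p: "0 < p" and vanishing: "unif_p_vanishing d A p S" and q: "0 < q"
  obtains \<delta> :: real and near where "0 < \<delta>"
    "\<And>\<beta>. \<beta> \<in> S \<Longrightarrow> \<forall>i\<in>fst (lower d A (ennreal \<delta>) \<beta>). near \<beta> i \<in> A"
    "\<And>\<beta>. \<beta> \<in> S \<Longrightarrow> (\<Sum>\<^sub>\<infinity>i\<in>fst (lower d A (ennreal \<delta>) \<beta>). enn_powr (d (snd \<beta> i) (near \<beta> i)) p) < ennreal q"
proof -
  have root: "0 < q powr (1 / p)" "(q powr (1 / p)) powr p = q" using p q by (auto simp: powr_powr)
  then obtain \<delta> where \<delta>: "0 < \<delta>"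
    and small: "\<And>\<beta>. \<beta> \<in> S \<Longrightarrow> W_p d A p (lower d A (ennreal \<delta>) \<beta>) zero_diag < ennreal (q powr (1 / p))"
    using vanishing unfolding unif_p_vanishing_def by meson
  have "\<exists>z. (\<forall>i\<in>fst (lower d A (ennreal \<delta>) \<beta>). z i \<in> A)
      \<and> (\<Sum>\<^sub>\<infinity>i\<in>fst (lower d A (ennreal \<delta>) \<beta>). enn_powr (d (snd \<beta> i) (z i)) p) < ennreal q" if "\<beta> \<in> S" for \<beta>
    using small[OF that] root(2) unfolding W_p_zero_less_iff[OF p root(1)] by simp
  then obtain near where "\<And>\<beta>. \<beta> \<in> S \<Longrightarrow> \<forall>i\<in>fst (lower d A (ennreal \<delta>) \<beta>). near \<beta> i \<in> A"
    "\<And>\<beta>. \<beta> \<in> S \<Longrightarrow> (\<Sum>\<^sub>\<infinity>i\<in>fst (lower d A (ennreal \<delta>) \<beta>). enn_powr (d (snd \<beta> i) (near \<beta> i)) p) < ennreal q"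
    by metis
  with \<delta> that show thesis by blast
qed

lemma totally_bounded_W_p_if_upper_bounds:
  assumes em: "ext_metric d" and p: "0 < p" and S: "S \<subseteq> diagrams A"
    and uuf: "unif_upper_finite d A S" and utb: "upper_tot_bounded d A S"
    and vanishing: "unif_p_vanishing d A p S"
  shows "totally_bounded_wrt (W_p d A p) S"
  unfolding totally_bounded_wrt_def
proof (intro allI impI)
  fix \<epsilon> :: real assume "0 < \<epsilon>"
  define q where "q = \<epsilon> powr p / 3"
  have q: "0 < q" using \<open>0 < \<epsilon>\<close> by (simp add: q_def)
  obtain \<delta> near where \<delta>: "0 < \<delta>"
    and near: "\<And>\<beta>. \<beta> \<in> S \<Longrightarrow> \<forall>i\<in>fst (lower d A (ennreal \<delta>) \<beta>). near \<beta> i \<in> A"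
      "\<And>\<beta>. \<beta> \<in> S \<Longrightarrow> (\<Sum>\<^sub>\<infinity>i\<in>fst (lower d A (ennreal \<delta>) \<beta>). enn_powr (d (snd \<beta> i) (near \<beta> i)) p) < ennreal q"
    by (rule unif_p_vanishing_lower_assignments[OF p vanishing q]) blast
  define U where "U \<alpha> = fst (upper d A (ennreal \<delta>) \<alpha>)" for \<alpha>
  obtain M where M: "\<And>\<alpha>. \<alpha> \<in> S \<Longrightarrow> finite (U \<alpha>) \<and> card (U \<alpha>) \<le> M"
    and nets: "\<And>\<eta>. 0 < \<eta> \<Longrightarrow> \<exists>F. finite F \<and> F \<subseteq> S \<and> (\<forall>\<beta>\<in>S. \<exists>\<alpha>\<in>F. \<exists>\<psi>.
        bij_betw \<psi> (U \<alpha>) (U \<beta>) \<and> (\<forall>k\<in>U \<alpha>. d (snd \<alpha> k) (snd \<beta> (\<psi> k)) < ennreal (2 * \<eta>)))"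
    by (rule upper_bijection_nets[OF em uuf utb \<delta>, folded U_def]) blast
  \<comment> \<open>matched upper points at distance below 2\<eta> contribute at most M c \<le> q\<close>
  define c where "c = q / (real M + 1)"
  define \<eta> where "\<eta> = c powr (1 / p) / 2"
  have c: "0 < c" "real M * c \<le> q" using q by (auto simp: c_def field_simps)
  have \<eta>: "0 < \<eta>" "(2 * \<eta>) powr p = c" using c(1) p by (auto simp: \<eta>_def powr_powr)
  obtain F where F: "finite F" "F \<subseteq> S" "\<forall>\<beta>\<in>S. \<exists>\<alpha>\<in>F. \<exists>\<psi>. bij_betw \<psi> (U \<alpha>) (U \<beta>)
      \<and> (\<forall>k\<in>U \<alpha>. d (snd \<alpha> k) (snd \<beta> (\<psi> k)) < ennreal (2 * \<eta>))"
    using nets[OF \<eta>(1)] by blast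
  show "\<exists>F. finite F \<and> F \<subseteq> S \<and> S \<subseteq> (\<Union>\<alpha>\<in>F. {\<beta>. W_p d A p \<alpha> \<beta> < ennreal \<epsilon>})"
  proof (intro exI conjI subsetI)
    fix \<beta> assume \<beta>: "\<beta> \<in> S"
    then obtain \<alpha> \<psi> where \<alpha>: "\<alpha> \<in> F" and \<psi>: "bij_betw \<psi> (U \<alpha>) (U \<beta>)"
      and close: "\<forall>k\<in>U \<alpha>. d (snd \<alpha> k) (snd \<beta> (\<psi> k)) < ennreal (2 * \<eta>)"
      using F(3) by blast
    have \<alpha>S: "\<alpha> \<in> S" using \<alpha> F(2) by blast
    have diag: "\<alpha> \<in> diagrams A" "\<beta> \<in> diagrams A" using \<alpha>S \<beta> S by auto
    have m: "is_matching A \<alpha> \<beta> (U \<alpha>) \<psi> (near \<alpha>) (near \<beta>)"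
      unfolding U_def using diag \<psi> near(1) \<alpha>S \<beta> by (intro is_matching_upper_bijection) (auto simp: U_def)
    have "cost_powr d p \<alpha> \<beta> (U \<alpha>) \<psi> (near \<alpha>) (near \<beta>) < ennreal (real M * (2 * \<eta>) powr p + q + q)"
      unfolding U_def using em p diag \<psi> M[OF \<alpha>S] close near(2)[OF \<alpha>S] near(2)[OF \<beta>] \<eta>(1) q
      by (intro cost_powr_upper_bijection_less) (auto simp: U_def less_imp_le)
    also have "\<dots> \<le> ennreal (\<epsilon> powr p)" using c(2) \<eta>(2) by (intro ennreal_leI) (simp add: q_def)
    finally have "W_p d A p \<alpha> \<beta> < ennreal \<epsilon>"
      unfolding W_p_less_iff[OF p \<open>0 < \<epsilon>\<close>] using m by blast
    then show "\<beta> \<in> (\<Union>\<alpha>\<in>F. {\<beta>. W_p d A p \<alpha> \<beta> < ennreal \<epsilon>})" using \<alpha> by blast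
  qed (use F in auto)
qed

theorem theorem7p29:
  fixes d :: "'a \<Rightarrow> 'a \<Rightarrow> ennreal" and A :: "'a set"
  assumes "metric_pair d A"
  shows "(\<forall>S. S \<subseteq> D_inf d A \<longrightarrow>
            (totally_bounded_wrt (W_inf d A) S \<longleftrightarrow>
               unif_upper_finite d A S \<and> upper_tot_bounded d A S))
       \<and> (\<forall>p::real. \<forall>S. 1 \<le> p \<longrightarrow> S \<subseteq> D_p d A p \<longrightarrow>
            (totally_bounded_wrt (W_p d A p) S \<longleftrightarrow>
               unif_upper_finite d A S \<and> upper_tot_bounded d A S \<and> unif_p_vanishing d A p S))"
proof -
  have em: "ext_metric d" using assms by (simp add: metric_pair_def)
  have "totally_bounded_wrt (W_inf d A) S \<longleftrightarrow> unif_upper_finite d A S \<and> upper_tot_bounded d A S"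
    if S: "S \<subseteq> D_inf d A" for S
  proof -
    have "S \<subseteq> diagrams A" using S by (auto simp: D_inf_def)
    then show ?thesis
      using upper_bounds_if_totally_bounded[OF em S _ W_inf_less_imp_matched_within]
        totally_bounded_W_inf_if_upper_bounds[OF em] by blast
  qed
  moreover have "totally_bounded_wrt (W_p d A p) S \<longleftrightarrow>
      unif_upper_finite d A S \<and> upper_tot_bounded d A S \<and> unif_p_vanishing d A p S"
    if "1 \<le> p" and S: "S \<subseteq> D_p d A p" for p :: real and S
  proof -
    have p: "0 < p" using \<open>1 \<le> p\<close> by simp
    have "S \<subseteq> D_inf d A" using S D_p_subset_D_inf[OF p] by blast
    moreover have "S \<subseteq> diagrams A" using S by (auto simp: D_p_def)
    ultimately show ?thesis
      using upper_bounds_if_totally_bounded[OF em _ _ W_p_less_imp_matched_within[OF p]]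
        unif_p_vanishing_if_totally_bounded[OF assms p S] totally_bounded_W_p_if_upper_bounds[OF em p]
      by blast
  qed
  ultimately show ?thesis by blast
qed

end
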